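(* Let $M$ be a structure and let $(\bar a_i,\bar b_i : i\in\mathbb Q)$ be a family of tuples in $M$ (all $\bar a_i$ of the same length, all $\bar b_i$ of the same length) which, viewed as indexed by $G_*$, is $L^*$-indiscernible. Then either the two sequences $(\bar a_i : i\in\mathbb Q)$ and $(\bar b_i : i\in\mathbb Q)$ are mutually indiscernible, or there is a formula $\phi(\bar x;\bar y)$ with parameters from $\{\bar a_i,\bar b_i : i\in\mathbb Q\}$, where $|\bar x|=|\bar a_i|$ and $|\bar y|=|\bar b_i|$, which has the independence property.
   Context: Let $L^*=\{U,\le_U,V,\le_V,R\}$ with $U,V$ unary and $\le_U,\le_V,R$ binary. An ordered bipartite graph is an $L^*$-structure $G$ in which $U,V$ partition the domain, $\le_U\subseteq U^2$ and $\le_V\subseteq V^2$ are linear orders on $U(G)$ and $V(G)$ respectively, and $R\subseteq U\times V$. $G_*$ denotes the random ordered bipartite graph, i.e. the countable Fraïssé limit of the class of finite ordered bipartite graphs; $(U(G_* ),\le_U)$ and $(V(G_* ),\le_V)$ are countable dense linear orders without endpoints, and we fix identifications of each with $(\mathbb Q,\le)$. A family $(\bar a_i,\bar b_i : i\in\mathbb Q)$ is viewed as indexed by $G_*$ by sending $i\in U(G_* )\cong\mathbb Q$ to $\bar a_i$ and $j\in V(G_* )\cong\mathbb Q$ to $\bar b_j$. For an $L^*$-structure $I$, a family $(\bar c_t : t\in I)$ in an $L$-structure $M$ is $L^*$-indiscernible if whenever $(t_1,\dots,t_n)$ and $(s_1,\dots,s_n)$ have the same quantifier-free $L^*$-type in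 $I$, the tuples $(\bar c_{t_1},\dots,\bar c_{t_n})$ and $(\bar c_{s_1},\dots,\bar c_{s_n})$ have the same $L$-type in $M$. Two sequences $(\bar a_i:i\in\mathbb Q)$ and $(\bar b_i:i\in\mathbb Q)$ are mutually indiscernible if each is an order-indiscernible sequence over the set of parameters appearing in the other. A formula $\phi(\bar x;\bar y)$ (possibly with parameters from $M$) has the independence property if in some elementary extension of $M$ there are $(\bar c_i:i\in\omega)$ and $(\bar d_S:S\subseteq\omega)$ with $\models\phi(\bar c_i;\bar d_S)\iff i\in S$. *)

theory Defs
  imports Main "HOL.Rat"
begin

datatype 'f trm = Var nat | Fn 'f "'f trm list"

datatype ('f, 'r) fm =
    Bot
  | Eq "'f trm" "'f trm"
  | Rel 'r "'f trm list"
  | Neg "('f, 'r) fm"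
  | Conj "('f, 'r) fm" "('f, 'r) fm"
  | Ex nat "('f, 'r) fm"

record ('a, 'f, 'r) struc =
  dom :: "'a set"
  funs :: "'f \<Rightarrow> 'a list \<Rightarrow> 'a"
  rels :: "'r \<Rightarrow> 'a list \<Rightarrow> bool"

type_synonym ('f, 'r) lang = "('f \<Rightarrow> nat) \<times> ('r \<Rightarrow> nat)"

fun wf_trm :: "('f \<Rightarrow> nat) \<Rightarrow> 'f trm \<Rightarrow> bool" where
  "wf_trm fa (Var n) = True"
| "wf_trm fa (Fn f ts) = (length ts = fa f \<and> (\<forall>t\<in>set ts. wf_trm fa t))"

fun wf_fm :: "('f, 'r) lang \<Rightarrow> ('f, 'r) fm \<Rightarrow> bool" where
  "wf_fm L Bot = True"
| "wf_fm L (Eq s t) = (wf_trm (fst L) s \<and> wf_trm (fst L) t)"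
| "wf_fm L (Rel r ts) = (length ts = snd L r \<and> (\<forall>t\<in>set ts. wf_trm (fst L) t))"
| "wf_fm L (Neg \<phi>) = wf_fm L \<phi>"
| "wf_fm L (Conj \<phi> \<psi>) = (wf_fm L \<phi> \<and> wf_fm L \<psi>)"
| "wf_fm L (Ex n \<phi>) = wf_fm L \<phi>"

fun fv_trm :: "'f trm \<Rightarrow> nat set" where
  "fv_trm (Var n) = {n}"
| "fv_trm (Fn f ts) = (\<Union>t\<in>set ts. fv_trm t)"

fun fv :: "('f, 'r) fm \<Rightarrow> nat set" where
  "fv Bot = {}"
| "fv (Eq s t) = fv_trm s \<union> fv_trm t"
| "fv (Rel r ts) = (\<Union>t\<in>set ts. fv_trm t)"
| "fv (Neg \<phi>) = fv \<phi>"
| "fv (Conj \<phi> \<psi>) = fv \<phi> \<union> fv \<psi>"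
| "fv (Ex n \<phi>) = fv \<phi> - {n}"

fun tval :: "('a, 'f, 'r, 'z) struc_scheme \<Rightarrow> (nat \<Rightarrow> 'a) \<Rightarrow> 'f trm \<Rightarrow> 'a" where
  "tval M e (Var n) = e n"
| "tval M e (Fn f ts) = funs M f (map (tval M e) ts)"

fun sat :: "('a, 'f, 'r, 'z) struc_scheme \<Rightarrow> (nat \<Rightarrow> 'a) \<Rightarrow> ('f, 'r) fm \<Rightarrow> bool" where
  "sat M e Bot = False"
| "sat M e (Eq s t) = (tval M e s = tval M e t)"
| "sat M e (Rel r ts) = rels M r (map (tval M e) ts)"
| "sat M e (Neg \<phi>) = (\<not> sat M e \<phi>)"
| "sat M e (Conj \<phi> \<psi>) = (sat M e \<phi> \<and> sat M e \<psi>)"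
| "sat M e (Ex n \<phi>) = (\<exists>x\<in>dom M. sat M (e(n := x)) \<phi>)"

definition is_struc :: "('f, 'r) lang \<Rightarrow> ('a, 'f, 'r) struc \<Rightarrow> bool" where
  "is_struc L M \<longleftrightarrow> dom M \<noteq> {} \<and>
     (\<forall>f xs. length xs = fst L f \<and> set xs \<subseteq> dom M \<longrightarrow> funs M f xs \<in> dom M)"

definition env :: "'a list \<Rightarrow> (nat \<Rightarrow> 'a) \<Rightarrow> nat \<Rightarrow> 'a" where
  "env xs e = (\<lambda>n. if n < length xs then xs ! n else e n)"

definition same_type :: "('f, 'r) lang \<Rightarrow> ('a, 'f, 'r) struc \<Rightarrow> 'a list \<Rightarrow> 'a list \<Rightarrow> bool" where
  "same_type L M xs ys \<longleftrightarrow> length xs = length ys \<and>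
     (\<forall>\<phi> e. wf_fm L \<phi> \<and> fv \<phi> \<subseteq> {..<length xs} \<and> range e \<subseteq> dom M \<longrightarrow>
        (sat M (env xs e) \<phi> \<longleftrightarrow> sat M (env ys e) \<phi>))"

definition same_type_over :: "('f, 'r) lang \<Rightarrow> ('a, 'f, 'r) struc \<Rightarrow> 'a set \<Rightarrow> 'a list \<Rightarrow> 'a list \<Rightarrow> bool" where
  "same_type_over L M P xs ys \<longleftrightarrow> length xs = length ys \<and>
     (\<forall>ps. set ps \<subseteq> P \<longrightarrow> same_type L M (xs @ ps) (ys @ ps))"

definition order_indisc_over :: "('f, 'r) lang \<Rightarrow> ('a, 'f, 'r) struc \<Rightarrow> 'a set \<Rightarrow> (rat \<Rightarrow> 'a list) \<Rightarrow> bool" where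
  "order_indisc_over L M P c \<longleftrightarrow>
     (\<forall>is js. sorted_wrt (<) is \<and> sorted_wrt (<) js \<and> length is = length js \<longrightarrow>
        same_type_over L M P (concat (map c is)) (concat (map c js)))"

definition params :: "(rat \<Rightarrow> 'a list) \<Rightarrow> 'a set" where
  "params c = (\<Union>i. set (c i))"

definition mutually_indisc :: "('f, 'r) lang \<Rightarrow> ('a, 'f, 'r) struc \<Rightarrow> (rat \<Rightarrow> 'a list) \<Rightarrow> (rat \<Rightarrow> 'a list) \<Rightarrow> bool" where
  "mutually_indisc L M a b \<longleftrightarrow> order_indisc_over L M (params b) a \<and> order_indisc_over L M (params a) b"

definition elem_emb :: "('f, 'r) lang \<Rightarrow> ('a, 'f, 'r) struc \<Rightarrow> ('b, 'f, 'r) struc \<Rightarrow> ('a \<Rightarrow> 'b) \<Rightarrow> bool" where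
  "elem_emb L M N h \<longleftrightarrow> is_struc L N \<and> h ` dom M \<subseteq> dom N \<and>
     (\<forall>\<phi> e. wf_fm L \<phi> \<and> range e \<subseteq> dom M \<longrightarrow> (sat M e \<phi> \<longleftrightarrow> sat N (h \<circ> e) \<phi>))"

text \<open>The formula phi(x;y;z) has variables x = 0..<nx, y = nx..<nx+ny, and parameters
  z = nx+ny..<nx+ny+length ps instantiated by ps.  The extension's carrier is taken in the type
  (nat => 'a) set, which is large enough to contain an ultrapower M^omega/U.\<close>
definition has_IP :: "('f, 'r) lang \<Rightarrow> ('a, 'f, 'r) struc \<Rightarrow> ('f, 'r) fm \<Rightarrow> nat \<Rightarrow> nat \<Rightarrow> 'a list \<Rightarrow> bool" where
  "has_IP L M \<phi> nx ny ps \<longleftrightarrow>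
     (\<exists>(N :: ((nat \<Rightarrow> 'a) set, 'f, 'r) struc) h. elem_emb L M N h \<and>
       (\<exists>(c :: nat \<Rightarrow> (nat \<Rightarrow> 'a) set list) (d :: nat set \<Rightarrow> (nat \<Rightarrow> 'a) set list).
          (\<forall>i. length (c i) = nx \<and> set (c i) \<subseteq> dom N) \<and>
          (\<forall>S. length (d S) = ny \<and> set (d S) \<subseteq> dom N) \<and>
          (\<forall>i S e. range e \<subseteq> dom N \<longrightarrow>
              (sat N (env (c i @ d S @ map h ps) e) \<phi> \<longleftrightarrow> i \<in> S))))"

text \<open>Index structure: U(G_*) = Inl ` Q, V(G_*) = Inr ` Q, the orders are those of Q,
  and R is an edge relation from U to V.  G_* is characterised (as the Fraisse limit
  of finite ordered bipartite graphs, via back-and-forth) by the extension property.\<close>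
definition gstar :: "(rat \<Rightarrow> rat \<Rightarrow> bool) \<Rightarrow> bool" where
  "gstar R \<longleftrightarrow>
     (\<forall>S T p q. finite S \<and> T \<subseteq> S \<and> p < q \<longrightarrow>
        (\<exists>u. p < u \<and> u < q \<and> (\<forall>v\<in>S. R u v \<longleftrightarrow> v \<in> T))) \<and>
     (\<forall>S T p q. finite S \<and> T \<subseteq> S \<and> p < q \<longrightarrow>
        (\<exists>v. p < v \<and> v < q \<and> (\<forall>u\<in>S. R u v \<longleftrightarrow> u \<in> T)))"

definition isU :: "rat + rat \<Rightarrow> bool" where "isU t \<longleftrightarrow> (\<exists>x. t = Inl x)"
definition isV :: "rat + rat \<Rightarrow> bool" where "isV t \<longleftrightarrow> (\<exists>x. t = Inr x)"
definition leU :: "rat + rat \<Rightarrow> rat + rat \<Rightarrow> bool" where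
  "leU t s \<longleftrightarrow> (\<exists>x y. t = Inl x \<and> s = Inl y \<and> x \<le> y)"
definition leV :: "rat + rat \<Rightarrow> rat + rat \<Rightarrow> bool" where
  "leV t s \<longleftrightarrow> (\<exists>x y. t = Inr x \<and> s = Inr y \<and> x \<le> y)"
definition relG :: "(rat \<Rightarrow> rat \<Rightarrow> bool) \<Rightarrow> rat + rat \<Rightarrow> rat + rat \<Rightarrow> bool" where
  "relG R t s \<longleftrightarrow> (\<exists>x y. t = Inl x \<and> s = Inr y \<and> R x y)"

text \<open>Equality of quantifier-free L*-types of tuples of indices (L* is relational, so
  this is agreement on all atomic formulas).\<close>
definition same_qftp :: "(rat \<Rightarrow> rat \<Rightarrow> bool) \<Rightarrow> (rat + rat) list \<Rightarrow> (rat + rat) list \<Rightarrow> bool" where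
  "same_qftp R ts ss \<longleftrightarrow> length ts = length ss \<and>
     (\<forall>k < length ts. (isU (ts!k) \<longleftrightarrow> isU (ss!k)) \<and> (isV (ts!k) \<longleftrightarrow> isV (ss!k))) \<and>
     (\<forall>k < length ts. \<forall>l < length ts.
        (ts!k = ts!l \<longleftrightarrow> ss!k = ss!l) \<and>
        (leU (ts!k) (ts!l) \<longleftrightarrow> leU (ss!k) (ss!l)) \<and>
        (leV (ts!k) (ts!l) \<longleftrightarrow> leV (ss!k) (ss!l)) \<and>
        (relG R (ts!k) (ts!l) \<longleftrightarrow> relG R (ss!k) (ss!l)))"

definition Lstar_indisc :: "('f, 'r) lang \<Rightarrow> ('a, 'f, 'r) struc \<Rightarrow> (rat \<Rightarrow> rat \<Rightarrow> bool) \<Rightarrow> (rat + rat \<Rightarrow> 'a list) \<Rightarrow> bool" where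
  "Lstar_indisc L M R c \<longleftrightarrow>
     (\<forall>ts ss. same_qftp R ts ss \<longrightarrow> same_type L M (concat (map c ts)) (concat (map c ss)))"

end

(*
  If the a-blocks are not indiscernible over the b-blocks, some formula tells apart two increasing
  tuples of a-blocks placed next to a fixed tuple of b-blocks.  By L*-indiscernibility its truth
  value depends only on the order types of the indices and on the pattern of R-edges between them,
  and changing this pattern one edge at a time shows that a single edge already matters.  Freezing
  all other indices, R u v becomes definable from a u and b v, for u and v in small "cells" of G_*.
  By the extension property of G_* these cells carry every finite bipartite pattern, so the formula
  shatters arbitrarily large finite sets, and a nonprincipal ultrapower turns this into the
  independence property.  The case where the b-blocks are not indiscernible is symmetric.
*)

theory Submission
  imports Defs
begin

section \<open>Coincidence and renaming for formulas\<close>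

lemma finite_fv_trm: "finite (fv_trm t)"
  by (induction t) auto

lemma finite_fv: "finite (fv \<phi>)"
  by (induction \<phi>) (auto simp: finite_fv_trm)

lemma tval_cong: "(\<And>k. k \<in> fv_trm t \<Longrightarrow> e k = e' k) \<Longrightarrow> tval M e t = tval M e' t"
proof (induction t)
  case (Fn f ts)
  then have "map (tval M e) ts = map (tval M e') ts" by (auto intro!: map_cong)
  then show ?case by (simp only: tval.simps)
qed simp

lemma sat_cong: "(\<And>k. k \<in> fv \<phi> \<Longrightarrow> e k = e' k) \<Longrightarrow> sat M e \<phi> = sat M e' \<phi>"
proof (induction \<phi> arbitrary: e e')
  case (Eq s t)
  then show ?case using tval_cong[of s e e' M] tval_cong[of t e e' M] by simp
next
  case (Rel r ts)
  have "tval M e t = tval M e' t" if "t \<in> set ts" for t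
    using Rel.prems that by (intro tval_cong) auto
  then have "map (tval M e) ts = map (tval M e') ts" by (rule map_cong[OF refl])
  then show ?case by (simp only: sat.simps)
next
  case (Ex n \<phi>)
  have "sat M (e(n := x)) \<phi> = sat M (e'(n := x)) \<phi>" for x using Ex.prems by (intro Ex.IH) auto
  then show ?case by simp
next
  case (Conj \<phi>1 \<phi>2)
  have "sat M e \<phi>1 = sat M e' \<phi>1" using Conj.prems by (intro Conj.IH(1)) auto
  moreover have "sat M e \<phi>2 = sat M e' \<phi>2" using Conj.prems by (intro Conj.IH(2)) auto
  ultimately show ?case by simp
next
  case (Neg \<phi>)
  have "sat M e \<phi> = sat M e' \<phi>" using Neg.prems by (intro Neg.IH) simp
  then show ?case by simp
qed simp

lemma tval_in_dom:
  assumes "is_struc L M" "wf_trm (fst L) t" "\<And>k. k \<in> fv_trm t \<Longrightarrow> e k \<in> dom M"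
  shows "tval M e t \<in> dom M"
  using assms(2,3)
proof (induction t)
  case (Fn f ts)
  then have "set (map (tval M e) ts) \<subseteq> dom M" "length (map (tval M e) ts) = fst L f" by auto
  then show ?case using assms(1) unfolding is_struc_def by simp
qed simp

lemma sat_env_indep:
  "fv \<phi> \<subseteq> {..<length xs} \<Longrightarrow> sat M (env xs e) \<phi> = sat M (env xs e') \<phi>"
  by (rule sat_cong) (auto simp: env_def)

fun tren :: "(nat \<Rightarrow> nat) \<Rightarrow> 'f trm \<Rightarrow> 'f trm" where
  "tren \<sigma> (Var n) = Var (\<sigma> n)"
| "tren \<sigma> (Fn f ts) = Fn f (map (tren \<sigma>) ts)"

text \<open>The bound variable is moved above all renamed free variables, so renaming never captures.\<close>

fun ren :: "(nat \<Rightarrow> nat) \<Rightarrow> ('f, 'r) fm \<Rightarrow> ('f, 'r) fm" where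
  "ren \<sigma> Bot = Bot"
| "ren \<sigma> (Eq s t) = Eq (tren \<sigma> s) (tren \<sigma> t)"
| "ren \<sigma> (Rel r ts) = Rel r (map (tren \<sigma>) ts)"
| "ren \<sigma> (Neg \<phi>) = Neg (ren \<sigma> \<phi>)"
| "ren \<sigma> (Conj \<phi> \<psi>) = Conj (ren \<sigma> \<phi>) (ren \<sigma> \<psi>)"
| "ren \<sigma> (Ex n \<phi>) = Ex (Suc (Max (insert 0 (\<sigma> ` (fv \<phi> - {n})))))
      (ren (\<sigma>(n := Suc (Max (insert 0 (\<sigma> ` (fv \<phi> - {n})))))) \<phi>)"

lemma tval_tren: "tval M e (tren \<sigma> t) = tval M (e \<circ> \<sigma>) t"
proof (induction t)
  case (Fn f ts)
  then have "map (tval M e \<circ> tren \<sigma>) ts = map (tval M (e \<circ> \<sigma>)) ts"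
    by (intro map_cong) (auto simp: comp_def)
  then show ?case by (simp only: tren.simps tval.simps map_map)
qed simp

lemma wf_trm_tren: "wf_trm fa (tren \<sigma> t) = wf_trm fa t"
  by (induction t) auto

lemma fv_trm_tren: "fv_trm (tren \<sigma> t) = \<sigma> ` fv_trm t"
  by (induction t) auto

lemma wf_ren: "wf_fm L (ren \<sigma> \<phi>) = wf_fm L \<phi>"
  by (induction \<phi> arbitrary: \<sigma>) (auto simp: wf_trm_tren)

lemma fv_ren: "fv (ren \<sigma> \<phi>) \<subseteq> \<sigma> ` fv \<phi>"
proof (induction \<phi> arbitrary: \<sigma>)
  case (Ex n \<phi>)
  define m where "m = Suc (Max (insert 0 (\<sigma> ` (fv \<phi> - {n}))))"
  have "fv (ren (\<sigma>(n := m)) \<phi>) \<subseteq> (\<sigma>(n := m)) ` fv \<phi>" by (rule Ex.IH)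
  then have "fv (ren (\<sigma>(n := m)) \<phi>) - {m} \<subseteq> \<sigma> ` (fv \<phi> - {n})" by auto
  then show ?case by (simp add: m_def[symmetric])
next
  case (Conj \<phi>1 \<phi>2)
  have "fv (ren \<sigma> \<phi>1) \<subseteq> \<sigma> ` fv \<phi>1" "fv (ren \<sigma> \<phi>2) \<subseteq> \<sigma> ` fv \<phi>2" by (rule Conj.IH)+
  then show ?case by auto
qed (auto simp: fv_trm_tren)

lemma sat_ren: "sat M e (ren \<sigma> \<phi>) = sat M (e \<circ> \<sigma>) \<phi>"
proof (induction \<phi> arbitrary: \<sigma> e)
  case (Ex n \<phi>)
  define m where "m = Suc (Max (insert 0 (\<sigma> ` (fv \<phi> - {n}))))"
  have fresh: "\<sigma> k \<noteq> m" if "k \<in> fv \<phi>" "k \<noteq> n" for k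
  proof -
    have "\<sigma> k \<le> Max (insert 0 (\<sigma> ` (fv \<phi> - {n})))" using that by (simp add: finite_fv)
    then show ?thesis by (simp add: m_def)
  qed
  have shift: "sat M (e(m := x) \<circ> \<sigma>(n := m)) \<phi> = sat M ((e \<circ> \<sigma>)(n := x)) \<phi>" for x
    by (rule sat_cong) (auto simp: fresh)
  have "sat M e (ren \<sigma> (Ex n \<phi>)) = (\<exists>x\<in>dom M. sat M (e(m := x)) (ren (\<sigma>(n := m)) \<phi>))"
    by (simp only: ren.simps sat.simps m_def)
  also have "\<dots> = (\<exists>x\<in>dom M. sat M (e(m := x) \<circ> \<sigma>(n := m)) \<phi>)" by (simp only: Ex.IH)
  also have "\<dots> = sat M (e \<circ> \<sigma>) (Ex n \<phi>)" by (simp only: shift sat.simps)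
  finally show ?case .
next
  case (Eq t1 t2) then show ?case by (simp add: tval_tren o_def)
next
  case (Rel r ts) then show ?case by (simp add: tval_tren o_def)
qed auto

lemma
  assumes "fv \<phi> \<subseteq> {..<length xs}"
    and "\<And>k. k < length xs \<Longrightarrow> \<sigma> k < length ys \<and> ys ! \<sigma> k = xs ! k"
  shows fv_ren_env: "fv (ren \<sigma> \<phi>) \<subseteq> {..<length ys}"
    and sat_ren_env: "sat M (env ys e) (ren \<sigma> \<phi>) = sat M (env xs e) \<phi>"
proof -
  have "\<sigma> ` fv \<phi> \<subseteq> {..<length ys}" using assms by auto
  then show "fv (ren \<sigma> \<phi>) \<subseteq> {..<length ys}" using fv_ren by blast
  have "(env ys e \<circ> \<sigma>) k = env xs e k" if "k \<in> fv \<phi>" for k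
    using assms that by (auto simp: env_def)
  then have "sat M (env ys e \<circ> \<sigma>) \<phi> = sat M (env xs e) \<phi>" by (rule sat_cong)
  then show "sat M (env ys e) (ren \<sigma> \<phi>) = sat M (env xs e) \<phi>" by (simp add: sat_ren)
qed

section \<open>Ultrapowers and the independence property\<close>

definition ultrafilter :: "'i filter \<Rightarrow> bool" where
  "ultrafilter U \<longleftrightarrow> U \<noteq> bot \<and> (\<forall>P. eventually P U \<or> eventually (\<lambda>x. \<not> P x) U)"

lemma ultrafilter_eventually_not:
  assumes "ultrafilter U"
  shows "eventually (\<lambda>x. \<not> P x) U \<longleftrightarrow> \<not> eventually P U"
proof
  assume "eventually (\<lambda>x. \<not> P x) U"
  moreover have "\<not> eventually (\<lambda>x. False) U"
    using assms by (simp add: ultrafilter_def trivial_limit_def)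
  ultimately show "\<not> eventually P U" using eventually_elim2 by blast
qed (use assms in \<open>auto simp: ultrafilter_def\<close>)

lemma minimal_proper_filter_ultrafilter:
  assumes "F \<noteq> bot" and min: "\<And>G. G \<noteq> bot \<Longrightarrow> G \<le> F \<Longrightarrow> G = F"
  shows "ultrafilter F"
  unfolding ultrafilter_def
proof (intro conjI allI disjCI)
  fix P assume "\<not> eventually (\<lambda>x. \<not> P x) F"
  then have "inf F (principal {x. P x}) \<noteq> bot"
    by (simp add: trivial_limit_def eventually_inf_principal)
  then have "inf F (principal {x. P x}) = F" by (rule min) simp
  moreover have "eventually P (inf F (principal {x. P x}))" by (simp add: eventually_inf_principal)
  ultimately show "eventually P F" by simp
qed (rule assms(1))

lemma ex_ultrafilter_le:
  fixes F :: "'i filter"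
  assumes "F \<noteq> bot"
  shows "\<exists>U. U \<le> F \<and> ultrafilter U"
proof -
  define R :: "('i filter \<times> 'i filter) set" where "R = {(G, H). H \<noteq> bot \<and> H \<le> G \<and> G \<le> F}"
  have R_iff: "(G, H) \<in> R \<longleftrightarrow> H \<noteq> bot \<and> H \<le> G \<and> G \<le> F" for G H
    by (simp add: R_def)
  have field: "Field R = {G. G \<noteq> bot \<and> G \<le> F}"
  proof -
    have "G \<noteq> bot \<and> G \<le> F \<and> H \<noteq> bot \<and> H \<le> F" if "(G, H) \<in> R" for G H
      using that order_trans[of H G F] le_bot[of G] le_bot[of H] unfolding R_iff by auto
    moreover have "(G, G) \<in> R" if "G \<noteq> bot" "G \<le> F" for G
      using that unfolding R_iff by simp
    ultimately show ?thesis unfolding Field_def by blast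
  qed
  have po: "Partial_order R"
  proof -
    have sub: "R \<subseteq> Field R \<times> Field R" unfolding Field_def by auto
    moreover have "(G, G) \<in> R" if "G \<in> Field R" for G using that by (simp add: field R_iff)
    ultimately have "refl_on (Field R) R" unfolding refl_on_def by blast
    moreover have "trans R"
      unfolding trans_def R_iff using order_trans by blast
    moreover have "antisym R" unfolding antisym_def R_iff by auto
    ultimately show ?thesis using sub unfolding partial_order_on_def preorder_on_def by blast
  qed
  have ub: "\<exists>B\<in>Field R. \<forall>G\<in>C. (G, B) \<in> R" if C: "C \<in> Chains R" for C
  proof (cases "C = {}")
    case True
    then show ?thesis using assms by (auto simp: field)
  next
    case False
    have C_proper: "G \<noteq> bot \<and> G \<le> F" if "G \<in> C" for G
      using C that field unfolding Chains_def Field_def by blast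
    have directed: "\<exists>H\<in>C. H \<le> inf G G'" if "G \<in> C" "G' \<in> C" for G G'
    proof -
      have "G \<le> G' \<or> G' \<le> G" using C that unfolding Chains_def R_iff by blast
      then show ?thesis using that by (auto simp: inf_absorb1 inf_absorb2)
    qed
    have "Inf C \<noteq> bot"
    proof
      assume "Inf C = bot"
      then have "eventually (\<lambda>x. False) (Inf C)" by simp
      then obtain G where "G \<in> C" "eventually (\<lambda>x. False) G"
        using eventually_Inf_base[OF False directed] by blast
      then show False using C_proper by (simp add: trivial_limit_def)
    qed
    moreover obtain G where "G \<in> C" using False by blast
    then have "Inf C \<le> F" using C_proper order_trans[OF Inf_lower] by blast
    ultimately show ?thesis using C_proper Inf_lower[of _ C] by (auto simp: field R_iff)
  qed
  from Zorns_po_lemma[OF po ub] obtain U where U: "U \<in> Field R"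
    and max: "\<forall>G\<in>Field R. (U, G) \<in> R \<longrightarrow> G = U" by (rule bexE)
  have "ultrafilter U"
  proof (rule minimal_proper_filter_ultrafilter)
    show "U \<noteq> bot" using U by (simp add: field)
    fix G assume "G \<noteq> bot" "G \<le> U"
    moreover have "U \<le> F" using U by (simp add: field)
    ultimately have "G \<in> Field R" "(U, G) \<in> R"
      using order_trans[of G U F] by (simp_all add: field R_iff)
    then show "G = U" using max by blast
  qed
  then show ?thesis using U by (auto simp: field)
qed

definition dom_seqs :: "('a, 'f, 'r) struc \<Rightarrow> (nat \<Rightarrow> 'a) set" where
  "dom_seqs M = {f. \<forall>n. f n \<in> dom M}"

definition uclass :: "nat filter \<Rightarrow> ('a, 'f, 'r) struc \<Rightarrow> (nat \<Rightarrow> 'a) \<Rightarrow> (nat \<Rightarrow> 'a) set" where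
  "uclass U M f = {g \<in> dom_seqs M. eventually (\<lambda>n. f n = g n) U}"

definition urep :: "(nat \<Rightarrow> 'a) set \<Rightarrow> nat \<Rightarrow> 'a" where
  "urep x = (SOME g. g \<in> x)"

definition upow :: "nat filter \<Rightarrow> ('a, 'f, 'r) struc \<Rightarrow> ((nat \<Rightarrow> 'a) set, 'f, 'r) struc" where
  "upow U M = \<lparr>dom = uclass U M ` dom_seqs M,
      funs = (\<lambda>f xs. uclass U M (\<lambda>n. funs M f (map (\<lambda>x. urep x n) xs))),
      rels = (\<lambda>r xs. eventually (\<lambda>n. rels M r (map (\<lambda>x. urep x n) xs)) U)\<rparr>"

lemma upow_simps:
  "dom (upow U M) = uclass U M ` dom_seqs M"
  "funs (upow U M) f xs = uclass U M (\<lambda>n. funs M f (map (\<lambda>x. urep x n) xs))"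
  "rels (upow U M) r xs = eventually (\<lambda>n. rels M r (map (\<lambda>x. urep x n) xs)) U"
  by (simp_all add: upow_def)

lemma uclass_cong: "eventually (\<lambda>n. f n = g n) U \<Longrightarrow> uclass U M f = uclass U M g"
  unfolding uclass_def by (auto elim: eventually_elim2)

lemma uclass_eq_iff:
  assumes "f \<in> dom_seqs M" "g \<in> dom_seqs M"
  shows "uclass U M f = uclass U M g \<longleftrightarrow> eventually (\<lambda>n. f n = g n) U"
proof
  assume "uclass U M f = uclass U M g"
  moreover have "g \<in> uclass U M g" using assms(2) by (simp add: uclass_def)
  ultimately have "g \<in> uclass U M f" by simp
  then show "eventually (\<lambda>n. f n = g n) U" by (simp add: uclass_def)
qed (rule uclass_cong)

lemma urep_uclass:
  assumes "f \<in> dom_seqs M"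
  shows "urep (uclass U M f) \<in> dom_seqs M" "eventually (\<lambda>n. urep (uclass U M f) n = f n) U"
proof -
  have "f \<in> uclass U M f" using assms by (simp add: uclass_def)
  then have "urep (uclass U M f) \<in> uclass U M f"
    unfolding urep_def by (rule someI[where P = "\<lambda>g. g \<in> uclass U M f"])
  then show "urep (uclass U M f) \<in> dom_seqs M" "eventually (\<lambda>n. urep (uclass U M f) n = f n) U"
    by (auto simp: uclass_def eq_commute)
qed

lemma uclass_urep:
  assumes "x \<in> dom (upow U M)"
  shows "uclass U M (urep x) = x"
proof -
  obtain f where f: "f \<in> dom_seqs M" "x = uclass U M f" using assms by (auto simp: upow_simps)
  then show ?thesis using urep_uclass(2)[OF f(1)] by (simp add: uclass_cong)
qed

lemma urep_in_dom: "x \<in> dom (upow U M) \<Longrightarrow> urep x n \<in> dom M"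
  using urep_uclass(1) by (fastforce simp: upow_simps dom_seqs_def)

lemma tval_upow_seq:
  assumes M: "is_struc L M" and e: "range e \<subseteq> dom (upow U M)" and t: "wf_trm (fst L) t"
  shows "(\<lambda>n. tval M (\<lambda>k. urep (e k) n) t) \<in> dom_seqs M"
proof -
  have "urep (e k) n \<in> dom M" for k n using e by (intro urep_in_dom) blast
  then have "tval M (\<lambda>k. urep (e k) n) t \<in> dom M" for n by (intro tval_in_dom[OF M t])
  then show ?thesis by (simp add: dom_seqs_def)
qed

lemma tval_upow:
  assumes M: "is_struc L M" and e: "range e \<subseteq> dom (upow U M)" and t: "wf_trm (fst L) t"
  shows "tval (upow U M) e t = uclass U M (\<lambda>n. tval M (\<lambda>k. urep (e k) n) t)"
  using t
proof (induction t)
  case (Var k)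
  have "e k \<in> dom (upow U M)" using e by auto
  then show ?case by (simp add: uclass_urep)
next
  case (Fn f ts)
  let ?\<tau> = "\<lambda>t n. tval M (\<lambda>k. urep (e k) n) t"
  have "eventually (\<lambda>n. urep (tval (upow U M) e t) n = ?\<tau> t n) U" if t: "t \<in> set ts" for t
  proof -
    have wf: "wf_trm (fst L) t" using Fn.prems t by simp
    have "tval (upow U M) e t = uclass U M (?\<tau> t)" using Fn.IH[OF t wf] .
    then show ?thesis using urep_uclass(2)[OF tval_upow_seq[OF M e wf]] by simp
  qed
  then have "eventually (\<lambda>n. \<forall>t\<in>set ts. urep (tval (upow U M) e t) n = ?\<tau> t n) U"
    by (intro eventually_ball_finite) auto
  then have "eventually (\<lambda>n. map (\<lambda>x. urep x n) (map (tval (upow U M) e) ts)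
      = map (tval M (\<lambda>k. urep (e k) n)) ts) U"
    by (rule eventually_mono) (simp add: map_eq_conv)
  then have "eventually (\<lambda>n. funs M f (map (\<lambda>x. urep x n) (map (tval (upow U M) e) ts))
      = funs M f (map (tval M (\<lambda>k. urep (e k) n)) ts)) U"
    by (rule eventually_mono) (simp only:)
  then show ?case by (simp add: upow_simps uclass_cong)
qed

theorem sat_upow_iff:
  assumes M: "is_struc L M" and U: "ultrafilter U"
    and e: "range e \<subseteq> dom (upow U M)" and \<phi>: "wf_fm L \<phi>"
  shows "sat (upow U M) e \<phi> \<longleftrightarrow> eventually (\<lambda>n. sat M (\<lambda>k. urep (e k) n) \<phi>) U"
  using e \<phi>
proof (induction \<phi> arbitrary: e)
  case Bot
  then show ?case using U by (simp add: ultrafilter_def trivial_limit_def)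
next
  case (Eq s t)
  then have "wf_trm (fst L) s" "wf_trm (fst L) t" by simp_all
  then show ?case
    by (simp only: sat.simps tval_upow[OF M Eq.prems(1)] uclass_eq_iff
        tval_upow_seq[OF M Eq.prems(1)])
next
  case (Rel r ts)
  have "eventually (\<lambda>n. urep (tval (upow U M) e t) n = tval M (\<lambda>k. urep (e k) n) t) U"
    if "t \<in> set ts" for t
  proof -
    have wf: "wf_trm (fst L) t" using Rel.prems(2) that by simp
    show ?thesis unfolding tval_upow[OF M Rel.prems(1) wf]
      by (rule urep_uclass(2)[OF tval_upow_seq[OF M Rel.prems(1) wf]])
  qed
  then have "eventually (\<lambda>n. \<forall>t\<in>set ts.
      urep (tval (upow U M) e t) n = tval M (\<lambda>k. urep (e k) n) t) U"
    by (intro eventually_ball_finite) auto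
  then have "eventually (\<lambda>n. map (\<lambda>x. urep x n) (map (tval (upow U M) e) ts)
      = map (tval M (\<lambda>k. urep (e k) n)) ts) U"
    by (rule eventually_mono) (simp add: map_eq_conv)
  then have "eventually (\<lambda>n. rels M r (map (\<lambda>x. urep x n) (map (tval (upow U M) e) ts))
      = rels M r (map (tval M (\<lambda>k. urep (e k) n)) ts)) U"
    by (rule eventually_mono) (simp only:)
  then show ?case by (simp add: upow_simps eventually_subst)
next
  case (Neg \<phi>)
  then show ?case using ultrafilter_eventually_not[OF U] by simp
next
  case (Conj \<phi> \<psi>)
  then show ?case by (simp add: eventually_conj_iff)
next
  case (Ex v \<phi>)
  let ?e = "\<lambda>n k. urep (e k) n"
  have IH: "sat (upow U M) (e(v := x)) \<phi> \<longleftrightarrow> eventually (\<lambda>n. sat M ((?e n)(v := urep x n)) \<phi>) U"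
    if "x \<in> dom (upow U M)" for x
  proof -
    have "range (e(v := x)) \<subseteq> dom (upow U M)" using Ex.prems(1) that by auto
    moreover have "wf_fm L \<phi>" using Ex.prems(2) by simp
    moreover have "(\<lambda>k. urep ((e(v := x)) k) n) = (?e n)(v := urep x n)" for n by auto
    ultimately show ?thesis using Ex.IH by presburger
  qed
  show ?case
  proof
    assume "sat (upow U M) e (Ex v \<phi>)"
    then obtain x where "x \<in> dom (upow U M)" "eventually (\<lambda>n. sat M ((?e n)(v := urep x n)) \<phi>) U"
      using IH by auto
    then show "eventually (\<lambda>n. sat M (?e n) (Ex v \<phi>)) U"
      by (auto elim!: eventually_mono intro: urep_in_dom)
  next
    assume ev: "eventually (\<lambda>n. sat M (?e n) (Ex v \<phi>)) U"
    obtain y0 where y0: "y0 \<in> dom M" using M unfolding is_struc_def by auto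
    have "\<forall>n. \<exists>y. y \<in> dom M \<and> (sat M (?e n) (Ex v \<phi>) \<longrightarrow> sat M ((?e n)(v := y)) \<phi>)"
      using y0 by auto
    then obtain g where g: "\<And>n. g n \<in> dom M"
      and g_wit: "\<And>n. sat M (?e n) (Ex v \<phi>) \<Longrightarrow> sat M ((?e n)(v := g n)) \<phi>"
      by metis
    have gseq: "g \<in> dom_seqs M" using g by (simp add: dom_seqs_def)
    have "eventually (\<lambda>n. sat M ((?e n)(v := urep (uclass U M g) n)) \<phi>) U"
      using urep_uclass(2)[OF gseq] ev by eventually_elim (simp add: g_wit)
    moreover have "uclass U M g \<in> dom (upow U M)" using gseq by (simp add: upow_simps)
    ultimately show "sat (upow U M) e (Ex v \<phi>)" using IH by auto
  qed
qed

lemma is_struc_upow: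
  assumes M: "is_struc L M"
  shows "is_struc L (upow U M)"
  unfolding is_struc_def
proof (intro conjI allI impI)
  obtain y0 where "y0 \<in> dom M" using M unfolding is_struc_def by auto
  then have "(\<lambda>_. y0) \<in> dom_seqs M" by (simp add: dom_seqs_def)
  then show "dom (upow U M) \<noteq> {}" by (auto simp: upow_simps)
next
  fix f xs assume xs: "length xs = fst L f \<and> set xs \<subseteq> dom (upow U M)"
  have "set (map (\<lambda>x. urep x n) xs) \<subseteq> dom M" for n using xs urep_in_dom by fastforce
  then have "funs M f (map (\<lambda>x. urep x n) xs) \<in> dom M" for n
    using M xs unfolding is_struc_def by simp
  then show "funs (upow U M) f xs \<in> dom (upow U M)" by (auto simp: upow_simps dom_seqs_def)
qed

lemma elem_emb_upow:
  fixes M :: "('a, 'f, 'r) struc"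
  assumes M: "is_struc L M" and U: "ultrafilter U"
  shows "elem_emb L M (upow U M) (\<lambda>a. uclass U M (\<lambda>_. a))"
  unfolding elem_emb_def
proof (intro conjI allI impI)
  let ?h = "\<lambda>a. uclass U M (\<lambda>_. a)"
  have const: "(\<lambda>_. a) \<in> dom_seqs M" if "a \<in> dom M" for a using that by (simp add: dom_seqs_def)
  show "is_struc L (upow U M)" by (rule is_struc_upow[OF M])
  show "?h ` dom M \<subseteq> dom (upow U M)" using const by (auto simp: upow_simps)
  fix \<phi> :: "('f, 'r) fm" and e :: "nat \<Rightarrow> 'a" assume \<phi>e: "wf_fm L \<phi> \<and> range e \<subseteq> dom M"
  then have "range (?h \<circ> e) \<subseteq> dom (upow U M)" using const by (auto simp: upow_simps)
  then have "sat (upow U M) (?h \<circ> e) \<phi> \<longleftrightarrow> eventually (\<lambda>n. sat M (\<lambda>k. urep (?h (e k)) n) \<phi>) U"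
    using sat_upow_iff[OF M U] \<phi>e by simp
  also have "\<dots> \<longleftrightarrow> eventually (\<lambda>n. sat M e \<phi>) U"
  proof (rule eventually_subst)
    have "eventually (\<lambda>n. urep (?h (e k)) n = e k) U" for k
      using \<phi>e by (intro urep_uclass(2) const) auto
    then have "eventually (\<lambda>n. \<forall>k\<in>fv \<phi>. urep (?h (e k)) n = e k) U"
      by (intro eventually_ball_finite[OF finite_fv]) auto
    then show "eventually (\<lambda>n. sat M (\<lambda>k. urep (?h (e k)) n) \<phi> = sat M e \<phi>) U"
      by (rule eventually_mono) (rule sat_cong, simp)
  qed
  also have "\<dots> \<longleftrightarrow> sat M e \<phi>" using U by (simp add: ultrafilter_def)
  finally show "sat M e \<phi> \<longleftrightarrow> sat (upow U M) (?h \<circ> e) \<phi>" by simp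
qed

definition ulist ::
    "nat filter \<Rightarrow> ('a, 'f, 'r) struc \<Rightarrow> (nat \<Rightarrow> 'a list) \<Rightarrow> nat \<Rightarrow> (nat \<Rightarrow> 'a) set list" where
  "ulist U M W len = map (\<lambda>k. uclass U M (\<lambda>n. W n ! k)) [0..<len]"

lemma length_ulist [simp]: "length (ulist U M W len) = len"
  by (simp add: ulist_def)

lemma ulist_append:
  assumes "\<And>n. length (A n) = la"
  shows "ulist U M (\<lambda>n. A n @ B n) (la + lb) = ulist U M A la @ ulist U M B lb"
  by (rule nth_equalityI) (auto simp: ulist_def nth_append assms)

lemma ulist_const: "ulist U M (\<lambda>_. xs) (length xs) = map (\<lambda>a. uclass U M (\<lambda>_. a)) xs"
  by (rule nth_equalityI) (simp_all add: ulist_def)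

lemma set_ulist:
  assumes "\<And>n. length (W n) = len \<and> set (W n) \<subseteq> dom M"
  shows "set (ulist U M W len) \<subseteq> dom (upow U M)"
proof -
  have "(\<lambda>n. W n ! k) \<in> dom_seqs M" if "k < len" for k
    using assms that nth_mem unfolding dom_seqs_def by fastforce
  then show ?thesis by (auto simp: ulist_def upow_simps)
qed

lemma sat_upow_ulist:
  assumes M: "is_struc L M" and U: "ultrafilter U"
    and W: "\<And>n. length (W n) = len \<and> set (W n) \<subseteq> dom M"
    and \<phi>: "wf_fm L \<phi>" "fv \<phi> \<subseteq> {..<len}" and e: "range e \<subseteq> dom (upow U M)"
  shows "sat (upow U M) (env (ulist U M W len) e) \<phi>
    \<longleftrightarrow> eventually (\<lambda>n. sat M (env (W n) (\<lambda>k. urep (e k) n)) \<phi>) U"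
proof -
  let ?Z = "ulist U M W len"
  have "env ?Z e k \<in> dom (upow U M)" for k
  proof (cases "k < len")
    case True
    then have "?Z ! k \<in> set ?Z" by (simp only: nth_mem length_ulist)
    then have "?Z ! k \<in> dom (upow U M)" using set_ulist[where W = W, OF W] by blast
    then show ?thesis using True by (simp add: env_def)
  next
    case False
    then show ?thesis using e by (auto simp: env_def)
  qed
  then have "range (env ?Z e) \<subseteq> dom (upow U M)" by auto
  then have "sat (upow U M) (env ?Z e) \<phi> \<longleftrightarrow> eventually (\<lambda>n. sat M (\<lambda>k. urep (env ?Z e k) n) \<phi>) U"
    using sat_upow_iff[OF M U] \<phi>(1) by blast
  also have "\<dots> \<longleftrightarrow> eventually (\<lambda>n. sat M (env (W n) (\<lambda>k. urep (e k) n)) \<phi>) U"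
  proof (rule eventually_subst)
    have "eventually (\<lambda>n. urep (?Z ! k) n = W n ! k) U" if "k < len" for k
    proof -
      have "(\<lambda>n. W n ! k) \<in> dom_seqs M" using W that nth_mem unfolding dom_seqs_def by fastforce
      then show ?thesis using that by (simp add: ulist_def urep_uclass(2))
    qed
    then have "eventually (\<lambda>n. \<forall>k\<in>{..<len}. urep (?Z ! k) n = W n ! k) U"
      by (intro eventually_ball_finite) auto
    then show "eventually (\<lambda>n.
        sat M (\<lambda>k. urep (env ?Z e k) n) \<phi> = sat M (env (W n) (\<lambda>k. urep (e k) n)) \<phi>) U"
    proof (rule eventually_mono)
      fix n assume "\<forall>k\<in>{..<len}. urep (?Z ! k) n = W n ! k"
      then show "sat M (\<lambda>k. urep (env ?Z e k) n) \<phi> = sat M (env (W n) (\<lambda>k. urep (e k) n)) \<phi>"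
        using \<phi>(2) W by (intro sat_cong) (auto simp: env_def)
    qed
  qed
  finally show ?thesis .
qed

text \<open>Since \<open>U\<close> is nonprincipal, \<open>i < n\<close> holds for \<open>U\<close>-almost all \<open>n\<close>; so the finite shatterings
  \<open>y n S\<close> add up to a full one in the ultrapower.\<close>

lemma has_IP_if_finitely_shattered:
  fixes M :: "('a, 'f, 'r) struc" and x :: "nat \<Rightarrow> 'a list" and y :: "nat \<Rightarrow> nat set \<Rightarrow> 'a list"
  assumes M: "is_struc L M" and \<psi>: "wf_fm L \<psi>" "fv \<psi> \<subseteq> {..<nx + ny + length ps}"
    and ps: "set ps \<subseteq> dom M"
    and x: "\<And>i. length (x i) = nx \<and> set (x i) \<subseteq> dom M"
    and y: "\<And>n S. length (y n S) = ny \<and> set (y n S) \<subseteq> dom M"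
    and shattered: "\<And>i n S e. i < n \<Longrightarrow> range e \<subseteq> dom M \<Longrightarrow>
      sat M (env (x i @ y n S @ ps) e) \<psi> \<longleftrightarrow> i \<in> S"
  shows "has_IP L M \<psi> nx ny ps"
proof -
  obtain U :: "nat filter" where U: "U \<le> sequentially" "ultrafilter U"
    using ex_ultrafilter_le[OF sequentially_bot] by blast
  define h where "h a = uclass U M (\<lambda>_. a)" for a
  define c where "c i = map h (x i)" for i
  define d where "d S = ulist U M (\<lambda>n. y n S) ny" for S
  define W where "W i S n = x i @ y n S @ ps" for i S n
  have W: "length (W i S n) = nx + ny + length ps \<and> set (W i S n) \<subseteq> dom M" for i S n
    using x y ps by (simp add: W_def)
  have cdps: "c i @ d S @ map h ps = ulist U M (W i S) (nx + ny + length ps)" for i S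
    using x y unfolding c_def d_def h_def W_def
    by (simp add: ulist_append ulist_const[symmetric] add.assoc)
  have in_dom: "set (c i @ d S @ map h ps) \<subseteq> dom (upow U M)" for i S
    unfolding cdps by (rule set_ulist) (rule W)
  have shattered_upow: "sat (upow U M) (env (c i @ d S @ map h ps) e) \<psi> \<longleftrightarrow> i \<in> S"
    if e: "range e \<subseteq> dom (upow U M)" for i S e
  proof -
    have "eventually (\<lambda>n. i < n) U" using U(1) by (rule filter_leD) (rule eventually_gt_at_top)
    then have "eventually (\<lambda>n. sat M (env (W i S n) (\<lambda>k. urep (e k) n)) \<psi> \<longleftrightarrow> i \<in> S) U"
    proof (rule eventually_mono)
      fix n assume "i < n"
      moreover have "range (\<lambda>k. urep (e k) n) \<subseteq> dom M" using e urep_in_dom by blast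
      ultimately show "sat M (env (W i S n) (\<lambda>k. urep (e k) n)) \<psi> \<longleftrightarrow> i \<in> S"
        unfolding W_def by (rule shattered)
    qed
    then have "eventually (\<lambda>n. sat M (env (W i S n) (\<lambda>k. urep (e k) n)) \<psi>) U \<longleftrightarrow> i \<in> S"
      using U(2) by (simp add: eventually_subst ultrafilter_def)
    then show ?thesis unfolding cdps using sat_upow_ulist[OF M U(2) W \<psi> e] by simp
  qed
  have "length (c i) = nx" "set (c i) \<subseteq> dom (upow U M)" for i
    using x in_dom[of i "{}"] by (simp_all add: c_def)
  moreover have "length (d S) = ny" "set (d S) \<subseteq> dom (upow U M)" for S
    using in_dom[of 0 S] by (simp_all add: d_def)
  ultimately show ?thesis
    unfolding has_IP_def
    by (intro exI[of _ "upow U M"] exI[of _ h] conjI elem_emb_upow[OF M U(2), folded h_def]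
        exI[of _ c] exI[of _ d] allI impI shattered_upow) auto
qed

section \<open>Cells and edge patterns of \<open>G\<^sub>*\<close>\<close>

definition in_cell :: "(rat \<Rightarrow> rat \<Rightarrow> bool) \<Rightarrow> rat \<Rightarrow> rat \<Rightarrow> rat set \<Rightarrow> rat set \<Rightarrow> rat \<Rightarrow> bool" where
  "in_cell R lo hi F T u \<longleftrightarrow> lo < u \<and> u < hi \<and> (\<forall>y\<in>F. R u y \<longleftrightarrow> y \<in> T)"

lemma gstar_conversep: "gstar R \<Longrightarrow> gstar R\<inverse>\<inverse>"
  unfolding gstar_def conversep_iff by (simp only: conj_commute)

lemma gstar_ex_in_cell:
  assumes "gstar R" "finite F" "T \<subseteq> F" "lo < hi"
  shows "\<exists>u. in_cell R lo hi F T u"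
  using assms unfolding gstar_def in_cell_def by blast

lemma gstar_ex_strict_mono_in_cell:
  assumes "gstar R" "finite F" "T \<subseteq> F" "lo < hi"
  shows "\<exists>u :: nat \<Rightarrow> rat. strict_mono u \<and> (\<forall>i. in_cell R lo hi F T (u i))"
proof -
  have "\<exists>u. \<forall>i. in_cell R lo hi F T (u i) \<and> u i < u (Suc i)"
  proof (rule dependent_nat_choice)
    show "\<exists>u. in_cell R lo hi F T u" using gstar_ex_in_cell[OF assms] .
    fix u assume u: "in_cell R lo hi F T u"
    then have "u < hi" by (simp add: in_cell_def)
    then obtain u' where "in_cell R u hi F T u'" using gstar_ex_in_cell[OF assms(1-3)] by blast
    then have "in_cell R lo hi F T u' \<and> u < u'" using u unfolding in_cell_def by auto
    then show "\<exists>u'. in_cell R lo hi F T u' \<and> u < u'" by blast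
  qed
  then obtain u where "\<And>i. in_cell R lo hi F T (u i) \<and> u i < u (Suc i)" by blast
  moreover from this have "strict_mono u" by (simp add: strict_mono_Suc_iff)
  ultimately show ?thesis by auto
qed

text \<open>The disjointness conditions keep points chosen in one cell out of the finitely many points
  constraining the other.\<close>

definition defines_edges_on_cells :: "('f, 'r) lang \<Rightarrow> ('a, 'f, 'r) struc \<Rightarrow> (rat \<Rightarrow> rat \<Rightarrow> bool) \<Rightarrow>
    (rat \<Rightarrow> 'a list) \<Rightarrow> (rat \<Rightarrow> 'a list) \<Rightarrow> nat \<Rightarrow> nat \<Rightarrow> bool" where
  "defines_edges_on_cells L M R a b na nb \<longleftrightarrow> (\<exists>\<psi> ps lo1 hi1 F1 T1 lo2 hi2 F2 T2.
     wf_fm L \<psi> \<and> fv \<psi> \<subseteq> {..<na + nb + length ps} \<and> set ps \<subseteq> params a \<union> params b \<and>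
     lo1 < hi1 \<and> finite F1 \<and> T1 \<subseteq> F1 \<and> lo2 < hi2 \<and> finite F2 \<and> T2 \<subseteq> F2 \<and>
     F2 \<inter> {lo1<..<hi1} = {} \<and> F1 \<inter> {lo2<..<hi2} = {} \<and>
     (\<forall>u v e. in_cell R lo1 hi1 F1 T1 u \<and> in_cell R\<inverse>\<inverse> lo2 hi2 F2 T2 v \<and> range e \<subseteq> dom M \<longrightarrow>
        (sat M (env (a u @ b v @ ps) e) \<psi> \<longleftrightarrow> R u v)))"

lemma defines_edges_on_cellsI:
  assumes "wf_fm L \<psi>" "fv \<psi> \<subseteq> {..<na + nb + length ps}" "set ps \<subseteq> params a \<union> params b"
    "lo1 < hi1" "finite F1" "T1 \<subseteq> F1" "lo2 < hi2" "finite F2" "T2 \<subseteq> F2"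
    "F2 \<inter> {lo1<..<hi1} = {}" "F1 \<inter> {lo2<..<hi2} = {}"
    "\<And>u v e. in_cell R lo1 hi1 F1 T1 u \<Longrightarrow> in_cell R\<inverse>\<inverse> lo2 hi2 F2 T2 v \<Longrightarrow> range e \<subseteq> dom M \<Longrightarrow>
      sat M (env (a u @ b v @ ps) e) \<psi> \<longleftrightarrow> R u v"
  shows "defines_edges_on_cells L M R a b na nb"
proof -
  have "\<forall>u v e. in_cell R lo1 hi1 F1 T1 u \<and> in_cell R\<inverse>\<inverse> lo2 hi2 F2 T2 v \<and> range e \<subseteq> dom M \<longrightarrow>
      (sat M (env (a u @ b v @ ps) e) \<psi> \<longleftrightarrow> R u v)"
    using assms(12) by blast
  then show ?thesis
    unfolding defines_edges_on_cells_def using assms(1-11)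
    by (intro exI[of _ \<psi>] exI[of _ ps] exI[of _ lo1] exI[of _ hi1] exI[of _ F1] exI[of _ T1]
        exI[of _ lo2] exI[of _ hi2] exI[of _ F2] exI[of _ T2] conjI)
qed

lemma defines_edges_on_cellsE:
  assumes "defines_edges_on_cells L M R a b na nb"
  obtains \<psi> ps lo1 hi1 F1 T1 lo2 hi2 F2 T2 where
    "wf_fm L \<psi>" "fv \<psi> \<subseteq> {..<na + nb + length ps}" "set ps \<subseteq> params a \<union> params b"
    "lo1 < hi1" "finite F1" "T1 \<subseteq> F1" "lo2 < hi2" "finite F2" "T2 \<subseteq> F2"
    "F2 \<inter> {lo1<..<hi1} = {}" "F1 \<inter> {lo2<..<hi2} = {}"
    "\<And>u v e. in_cell R lo1 hi1 F1 T1 u \<Longrightarrow> in_cell R\<inverse>\<inverse> lo2 hi2 F2 T2 v \<Longrightarrow> range e \<subseteq> dom M \<Longrightarrow>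
      sat M (env (a u @ b v @ ps) e) \<psi> \<longleftrightarrow> R u v"
proof -
  obtain \<psi> ps lo1 hi1 F1 T1 lo2 hi2 F2 T2 where
    "wf_fm L \<psi> \<and> fv \<psi> \<subseteq> {..<na + nb + length ps} \<and> set ps \<subseteq> params a \<union> params b \<and>
     lo1 < hi1 \<and> finite F1 \<and> T1 \<subseteq> F1 \<and> lo2 < hi2 \<and> finite F2 \<and> T2 \<subseteq> F2 \<and>
     F2 \<inter> {lo1<..<hi1} = {} \<and> F1 \<inter> {lo2<..<hi2} = {} \<and>
     (\<forall>u v e. in_cell R lo1 hi1 F1 T1 u \<and> in_cell R\<inverse>\<inverse> lo2 hi2 F2 T2 v \<and> range e \<subseteq> dom M \<longrightarrow>
        (sat M (env (a u @ b v @ ps) e) \<psi> \<longleftrightarrow> R u v))"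
    using assms unfolding defines_edges_on_cells_def by (elim exE) (erule that)
  then show ?thesis by (intro that[of \<psi> ps lo1 hi1 F1 T1 lo2 hi2 F2 T2]) simp_all
qed

text \<open>Choose \<open>u\<^sub>0 < u\<^sub>1 < \<dots>\<close> in the first cell; by the extension property of \<open>G\<^sub>*\<close> the second
  cell contains, for every \<open>n\<close> and \<open>S\<close>, a \<open>v\<close> adjacent to exactly the \<open>u\<^sub>i\<close> with \<open>i \<in> S\<close>, \<open>i < n\<close>.\<close>

lemma has_IP_if_defines_edges:
  fixes M :: "('a, 'f, 'r) struc"
  assumes M: "is_struc L M" and G: "gstar R"
    and a: "\<And>i. length (a i) = na \<and> set (a i) \<subseteq> dom M"
    and b: "\<And>j. length (b j) = nb \<and> set (b j) \<subseteq> dom M"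
    and edges_definable: "defines_edges_on_cells L M R a b na nb"
  shows "\<exists>\<psi> ps. wf_fm L \<psi> \<and> fv \<psi> \<subseteq> {..<na + nb + length ps} \<and>
    set ps \<subseteq> params a \<union> params b \<and> has_IP L M \<psi> na nb ps"
proof -
  obtain \<psi> ps lo1 hi1 F1 T1 lo2 hi2 F2 T2 where
    \<psi>: "wf_fm L \<psi>" "fv \<psi> \<subseteq> {..<na + nb + length ps}" and ps: "set ps \<subseteq> params a \<union> params b"
    and cell1: "lo1 < hi1" "finite F1" "T1 \<subseteq> F1" and cell2: "lo2 < hi2" "finite F2" "T2 \<subseteq> F2"
    and disjoint: "F2 \<inter> {lo1<..<hi1} = {}" "F1 \<inter> {lo2<..<hi2} = {}"
    and edges: "\<And>u v e. in_cell R lo1 hi1 F1 T1 u \<Longrightarrow> in_cell R\<inverse>\<inverse> lo2 hi2 F2 T2 v \<Longrightarrow> range e \<subseteq> dom M \<Longrightarrow>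
      sat M (env (a u @ b v @ ps) e) \<psi> \<longleftrightarrow> R u v"
    by (rule defines_edges_on_cellsE[OF edges_definable]) (rule that)
  obtain u :: "nat \<Rightarrow> rat" where u_mono: "strict_mono u" and u: "\<And>i. in_cell R lo1 hi1 F1 T1 (u i)"
    using gstar_ex_strict_mono_in_cell[OF G cell1(2,3,1)] by blast
  have u_notin: "u i \<notin> F2" for i using u[of i] disjoint(1) unfolding in_cell_def by auto
  have inj: "inj u" using u_mono by (rule strict_mono_imp_inj_on)
  have ex_v: "\<exists>v. in_cell R\<inverse>\<inverse> lo2 hi2 F2 T2 v \<and> (\<forall>i<n. R (u i) v \<longleftrightarrow> i \<in> S)" for n S
  proof -
    have fin: "finite (F2 \<union> u ` {..<n})" and sub: "T2 \<union> u ` ({..<n} \<inter> S) \<subseteq> F2 \<union> u ` {..<n}"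
      using cell2 by auto
    obtain v where v: "in_cell R\<inverse>\<inverse> lo2 hi2 (F2 \<union> u ` {..<n}) (T2 \<union> u ` ({..<n} \<inter> S)) v"
      by (rule exE[OF gstar_ex_in_cell[OF gstar_conversep[OF G] fin sub cell2(1)]])
    have "in_cell R\<inverse>\<inverse> lo2 hi2 F2 T2 v" using v u_notin unfolding in_cell_def by auto
    moreover have "R (u i) v \<longleftrightarrow> i \<in> S" if "i < n" for i
    proof -
      have "R (u i) v \<longleftrightarrow> u i \<in> T2 \<union> u ` ({..<n} \<inter> S)" using v that unfolding in_cell_def by simp
      also have "\<dots> \<longleftrightarrow> i \<in> S" using u_notin[of i] cell2(3) that inj_image_mem_iff[OF inj] by auto
      finally show ?thesis .
    qed
    ultimately show ?thesis by blast
  qed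
  define v where "v n S = (SOME v. in_cell R\<inverse>\<inverse> lo2 hi2 F2 T2 v \<and> (\<forall>i<n. R (u i) v \<longleftrightarrow> i \<in> S))" for n S
  have v: "in_cell R\<inverse>\<inverse> lo2 hi2 F2 T2 (v n S)" and v_adj: "i < n \<Longrightarrow> R (u i) (v n S) \<longleftrightarrow> i \<in> S" for n S i
    using someI_ex[OF ex_v[of n S]] unfolding v_def by auto
  have ps_dom: "set ps \<subseteq> dom M" using ps a b unfolding params_def by blast
  have "has_IP L M \<psi> na nb ps"
  proof (rule has_IP_if_finitely_shattered
      [where x = "\<lambda>i. a (u i)" and y = "\<lambda>n S. b (v n S)", OF M \<psi> ps_dom])
    show "length (a (u i)) = na \<and> set (a (u i)) \<subseteq> dom M" for i by (rule a)
    show "length (b (v n S)) = nb \<and> set (b (v n S)) \<subseteq> dom M" for n S by (rule b)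
    show "sat M (env (a (u i) @ b (v n S) @ ps) e) \<psi> \<longleftrightarrow> i \<in> S"
      if "i < n" "range e \<subseteq> dom M" for i n S e
      using edges[OF u v that(2)] v_adj[OF that(1)] by simp
  qed
  then show ?thesis using \<psi> ps by blast
qed

definition same_order_type :: "rat list \<Rightarrow> rat list \<Rightarrow> bool" where
  "same_order_type xs ys \<longleftrightarrow> length xs = length ys \<and>
     (\<forall>p<length xs. \<forall>q<length xs. xs ! p \<le> xs ! q \<longleftrightarrow> ys ! p \<le> ys ! q)"

lemma same_order_type_refl: "same_order_type xs xs"
  by (simp add: same_order_type_def)

lemma same_order_type_sym: "same_order_type xs ys \<Longrightarrow> same_order_type ys xs"
  by (simp add: same_order_type_def)

lemma same_order_type_trans:
  "same_order_type xs ys \<Longrightarrow> same_order_type ys zs \<Longrightarrow> same_order_type xs zs"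
  by (simp add: same_order_type_def)

lemma same_order_type_eq_iff:
  assumes "same_order_type xs ys" "p < length xs" "q < length xs"
  shows "xs ! p = xs ! q \<longleftrightarrow> ys ! p = ys ! q"
  using assms unfolding same_order_type_def by (metis order.eq_iff)

lemma sorted_same_order_type:
  assumes "sorted_wrt (<) xs" "sorted_wrt (<) ys" "length xs = length ys"
  shows "same_order_type xs ys"
proof -
  have le_iff: "zs ! p \<le> zs ! q \<longleftrightarrow> p \<le> q"
    if "sorted_wrt (<) zs" "p < length zs" "q < length zs" for zs :: "rat list" and p q
    using sorted_wrt_nth_less[OF that(1)] that(2,3)
      by (metis linorder_not_less order.order_iff_strict)
  show ?thesis
    using assms le_iff[OF assms(1)] le_iff[OF assms(2)] by (simp add: same_order_type_def)
qed

lemma same_order_type_update: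
  assumes r: "r < length xs" "lo < xs ! r" "xs ! r < hi" and y: "lo < y" "y < hi"
    and outside: "\<And>p. p < length xs \<Longrightarrow> p \<noteq> r \<Longrightarrow> xs ! p \<le> lo \<or> hi \<le> xs ! p"
  shows "same_order_type xs (xs[r := y])"
  unfolding same_order_type_def
proof (intro conjI allI impI)
  fix p q assume p: "p < length xs" and q: "q < length xs"
  show "xs ! p \<le> xs ! q \<longleftrightarrow> xs[r := y] ! p \<le> xs[r := y] ! q"
    using outside[OF p] outside[OF q] r y p q by (cases "p = r"; cases "q = r") auto
qed simp

lemma ex_isolating_interval:
  fixes x :: rat
  assumes "finite S"
  shows "\<exists>lo hi. lo < x \<and> x < hi \<and> (\<forall>y\<in>S. y \<noteq> x \<longrightarrow> y \<le> lo \<or> hi \<le> y)"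
  using assms
proof (induction S rule: finite_induct)
  case empty
  show ?case by (intro exI[of _ "x - 1"] exI[of _ "x + 1"]) simp
next
  case (insert z S)
  then obtain lo hi where I: "lo < x" "x < hi" "\<forall>y\<in>S. y \<noteq> x \<longrightarrow> y \<le> lo \<or> hi \<le> y" by blast
  consider "z < x" | "z = x" | "x < z" by linarith
  then show ?case
  proof cases
    case 1
    then show ?thesis using I by (intro exI[of _ "max lo z"] exI[of _ hi]) auto
  next
    case 2
    then show ?thesis using I by blast
  next
    case 3
    then show ?thesis using I by (intro exI[of _ lo] exI[of _ "min hi z"]) auto
  qed
qed

definition edge_pattern :: "(rat \<Rightarrow> rat \<Rightarrow> bool) \<Rightarrow> rat list \<Rightarrow> rat list \<Rightarrow> (nat \<times> nat) set" where
  "edge_pattern R us vs = {(p, q). p < length us \<and> q < length vs \<and> R (us ! p) (vs ! q)}"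

lemma edge_pattern_subset: "edge_pattern R us vs \<subseteq> {..<length us} \<times> {..<length vs}"
  by (auto simp: edge_pattern_def)

lemma edge_pattern_update:
  assumes P: "P = edge_pattern R us vs" and rs: "r < length us" "s < length vs" "(r, s) \<notin> P"
    and u: "\<And>q. q < length vs \<Longrightarrow> q \<noteq> s \<Longrightarrow> R u (vs ! q) \<longleftrightarrow> (r, q) \<in> P"
    and v: "\<And>p. p < length us \<Longrightarrow> p \<noteq> r \<Longrightarrow> R (us ! p) v \<longleftrightarrow> (p, s) \<in> P"
  shows "edge_pattern R (us[r := u]) (vs[s := v]) = (if R u v then insert (r, s) P else P)"
proof -
  have "(p, q) \<in> edge_pattern R (us[r := u]) (vs[s := v]) \<longleftrightarrow>
      (p, q) \<in> (if R u v then insert (r, s) P else P)"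
    for p q
  proof (cases "p < length us \<and> q < length vs")
    case True
    then show ?thesis
      using rs u[of q] v[of p]
        unfolding P by (cases "p = r"; cases "q = s") (auto simp: edge_pattern_def)
  next
    case False
    then show ?thesis using rs unfolding P by (auto simp: edge_pattern_def)
  qed
  then show ?thesis by auto
qed

lemma ex_insert_changes:
  assumes "finite A" "finite B" "f A \<noteq> f B"
  obtains E x where "x \<notin> E" "insert x E \<subseteq> A \<union> B" "f (insert x E) \<noteq> f E"
proof -
  have from_empty: "\<exists>E x. x \<notin> E \<and> insert x E \<subseteq> X \<and> f (insert x E) \<noteq> f E"
    if "finite X" "f X \<noteq> f {}" for X
    using that
  proof (induction X rule: finite_induct)
    case (insert x X)
    show ?case
    proof (cases "f X = f {}")
      case True
      then have "f (insert x X) \<noteq> f X" using insert.prems by simp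
      then show ?thesis using insert.hyps(2) by blast
    next
      case False
      then obtain E y where "y \<notin> E" "insert y E \<subseteq> X" "f (insert y E) \<noteq> f E"
        using insert.IH by blast
      then show ?thesis by blast
    qed
  qed simp
  have "\<exists>E x. x \<notin> E \<and> insert x E \<subseteq> A \<union> B \<and> f (insert x E) \<noteq> f E"
  proof (cases "f A = f {}")
    case True
    then have "f B \<noteq> f {}" using assms(3) by simp
    then show ?thesis using from_empty[OF assms(2)] by blast
  next
    case False
    then show ?thesis using from_empty[OF assms(1)] by blast
  qed
  then show ?thesis using that by blast
qed

lemma index_relation_simps [simp]:
  "isU (Inl x)" "\<not> isU (Inr x)" "\<not> isV (Inl x)" "isV (Inr x)"
  "leU (Inl x) (Inl y) \<longleftrightarrow> x \<le> y" "\<not> leU (Inr x) t" "\<not> leU t (Inr x)"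
  "leV (Inr x) (Inr y) \<longleftrightarrow> x \<le> y" "\<not> leV (Inl x) t" "\<not> leV t (Inl x)"
  "relG R (Inl x) (Inr y) \<longleftrightarrow> R x y" "\<not> relG R (Inr x) t" "\<not> relG R t (Inl x)"
  by (auto simp: isU_def isV_def leU_def leV_def relG_def)

lemma nth_Inl_Inr:
  "k < length us + length vs \<Longrightarrow>
    (map Inl us @ map Inr vs) ! k =
      (if k < length us then Inl (us ! k) else Inr (vs ! (k - length us)))"
  by (simp add: nth_append)

lemma same_qftp_if_same_order_pattern:
  assumes us: "same_order_type us us'" and vs: "same_order_type vs vs'"
    and P: "edge_pattern R us vs = edge_pattern R us' vs'"
  shows "same_qftp R (map Inl us @ map Inr vs) (map Inl us' @ map Inr vs')"
  unfolding same_qftp_def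
proof (intro conjI allI impI)
  have lu: "length us' = length us" and lv: "length vs' = length vs"
    using us vs by (simp_all add: same_order_type_def)
  have le_u: "us ! p \<le> us ! q \<longleftrightarrow> us' ! p \<le> us' ! q" if "p < length us" "q < length us" for p q
    using us that by (simp add: same_order_type_def)
  have le_v: "vs ! p \<le> vs ! q \<longleftrightarrow> vs' ! p \<le> vs' ! q" if "p < length vs" "q < length vs" for p q
    using vs that by (simp add: same_order_type_def)
  have eq_u: "us ! p = us ! q \<longleftrightarrow> us' ! p = us' ! q" if "p < length us" "q < length us" for p q
    using same_order_type_eq_iff[OF us that] .
  have eq_v: "vs ! p = vs ! q \<longleftrightarrow> vs' ! p = vs' ! q" if "p < length vs" "q < length vs" for p q
    using same_order_type_eq_iff[OF vs that] .
  have edge: "R (us ! p) (vs ! q) \<longleftrightarrow> R (us' ! p) (vs' ! q)"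
    if "p < length us" "q < length vs" for p q
  proof -
    have "(p, q) \<in> edge_pattern R us vs \<longleftrightarrow> (p, q) \<in> edge_pattern R us' vs'" using P by simp
    then show ?thesis using that lu lv by (simp add: edge_pattern_def)
  qed
  show "length (map Inl us @ map Inr vs) = length (map Inl us' @ map Inr vs')" using lu lv by simp
  fix k assume "k < length (map Inl us @ map Inr vs)"
  then have k: "k < length us + length vs" "k < length us' + length vs'" using lu lv by simp_all
  then have k_vs: "\<not> k < length us \<Longrightarrow> k - length us < length vs" by linarith
  show "isU ((map Inl us @ map Inr vs) ! k) = isU ((map Inl us' @ map Inr vs') ! k)"
    "isV ((map Inl us @ map Inr vs) ! k) = isV ((map Inl us' @ map Inr vs') ! k)"
    unfolding nth_Inl_Inr[OF k(1)] nth_Inl_Inr[OF k(2)] lu by simp_all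
  fix l assume "l < length (map Inl us @ map Inr vs)"
  then have l: "l < length us + length vs" "l < length us' + length vs'" using lu lv by simp_all
  then have l_vs: "\<not> l < length us \<Longrightarrow> l - length us < length vs" by linarith
  note nths = nth_Inl_Inr[OF k(1)] nth_Inl_Inr[OF k(2)] nth_Inl_Inr[OF l(1)] nth_Inl_Inr[OF l(2)] lu
  show "((map Inl us @ map Inr vs) ! k = (map Inl us @ map Inr vs) ! l) =
      ((map Inl us' @ map Inr vs') ! k = (map Inl us' @ map Inr vs') ! l)"
    unfolding nths
      by (cases "k < length us"; cases "l < length us") (simp_all add: eq_u eq_v k_vs l_vs)
  show "leU ((map Inl us @ map Inr vs) ! k) ((map Inl us @ map Inr vs) ! l) =
      leU ((map Inl us' @ map Inr vs') ! k) ((map Inl us' @ map Inr vs') ! l)"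
    unfolding nths by (cases "k < length us"; cases "l < length us") (simp_all add: le_u)
  show "leV ((map Inl us @ map Inr vs) ! k) ((map Inl us @ map Inr vs) ! l) =
      leV ((map Inl us' @ map Inr vs') ! k) ((map Inl us' @ map Inr vs') ! l)"
    unfolding nths by (cases "k < length us"; cases "l < length us") (simp_all add: le_v k_vs l_vs)
  show "relG R ((map Inl us @ map Inr vs) ! k) ((map Inl us @ map Inr vs) ! l) =
      relG R ((map Inl us' @ map Inr vs') ! k) ((map Inl us' @ map Inr vs') ! l)"
    unfolding nths by (cases "k < length us"; cases "l < length us") (simp_all add: edge k_vs l_vs)
qed

definition swap_sides :: "rat + rat \<Rightarrow> rat + rat" where
  "swap_sides = case_sum Inr Inl"

lemma swap_sides_simps:
  "isU (swap_sides t) = isV t" "isV (swap_sides t) = isU t"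
  "leU (swap_sides t) (swap_sides s) = leV t s" "leV (swap_sides t) (swap_sides s) = leU t s"
  "relG R (swap_sides t) (swap_sides s) = relG R\<inverse>\<inverse> s t"
  "swap_sides t = swap_sides s \<longleftrightarrow> t = s"
  by (cases t; cases s; simp add: swap_sides_def isU_def isV_def leU_def leV_def relG_def)+

lemma same_qftp_swap_sides:
  assumes "same_qftp R\<inverse>\<inverse> ts ss"
  shows "same_qftp R (map swap_sides ts) (map swap_sides ss)"
  using assms unfolding same_qftp_def by (simp add: swap_sides_simps)

lemma Lstar_indisc_swap:
  assumes "Lstar_indisc L M R (case_sum a b)"
  shows "Lstar_indisc L M R\<inverse>\<inverse> (case_sum b a)"
  unfolding Lstar_indisc_def
proof (intro allI impI)
  fix ts ss assume "same_qftp R\<inverse>\<inverse> ts ss"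
  then have "same_type L M (concat (map (case_sum a b) (map swap_sides ts)))
      (concat (map (case_sum a b) (map swap_sides ss)))"
    using assms same_qftp_swap_sides unfolding Lstar_indisc_def by blast
  moreover have "case_sum a b \<circ> swap_sides = case_sum b a"
    by (rule ext) (simp add: swap_sides_def split: sum.split)
  ultimately show "same_type L M (concat (map (case_sum b a) ts)) (concat (map (case_sum b a) ss))"
    by (simp add: map_map)
qed

lemma gstar_ex_sorted_with_edge_pattern:
  assumes G: "gstar R" and vs: "distinct vs" and E: "E \<subseteq> {..<K} \<times> {..<length vs}"
  shows "\<exists>us. length us = K \<and> sorted_wrt (<) us \<and> edge_pattern R us vs = E"
proof -
  have "\<exists>us. length us = n \<and> (\<forall>p<n. of_nat p < us ! p \<and> us ! p < of_nat p + 1) \<and>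
      (\<forall>p<n. \<forall>q<length vs. R (us ! p) (vs ! q) \<longleftrightarrow> (p, q) \<in> E)" for n
  proof (induction n)
    case (Suc n)
    then obtain us where us: "length us = n" "\<forall>p<n. of_nat p < us ! p \<and> us ! p < of_nat p + 1"
      "\<forall>p<n. \<forall>q<length vs. R (us ! p) (vs ! q) \<longleftrightarrow> (p, q) \<in> E" by blast
    have "(\<lambda>q. vs ! q) ` {q. q < length vs \<and> (n, q) \<in> E} \<subseteq> set vs" by auto
    then obtain u where
      u: "in_cell R (of_nat n) (of_nat n + 1) (set vs)
        ((\<lambda>q. vs ! q) ` {q. q < length vs \<and> (n, q) \<in> E}) u"
      using gstar_ex_in_cell[OF G finite_set] by fastforce
    have "R u (vs ! q) \<longleftrightarrow> (n, q) \<in> E" if "q < length vs" for q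
      using u that vs by (auto simp: in_cell_def nth_eq_iff_index_eq)
    then have "length (us @ [u]) = Suc n \<and>
      (\<forall>p<Suc n. of_nat p < (us @ [u]) ! p \<and> (us @ [u]) ! p < of_nat p + 1) \<and>
      (\<forall>p<Suc n. \<forall>q<length vs. R ((us @ [u]) ! p) (vs ! q) \<longleftrightarrow> (p, q) \<in> E)"
      using us u by (auto simp: in_cell_def nth_append less_Suc_eq)
    then show ?case by blast
  qed simp
  then obtain us where us: "length us = K" "\<forall>p<K. of_nat p < us ! p \<and> us ! p < of_nat p + 1"
      "\<forall>p<K. \<forall>q<length vs. R (us ! p) (vs ! q) \<longleftrightarrow> (p, q) \<in> E" by blast
  have "us ! p < us ! q" if "p < q" "q < length us" for p q
  proof -
    have "us ! p < of_nat p + 1" "of_nat q < us ! q" using us that by auto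
    moreover have "of_nat p + 1 \<le> (of_nat q :: rat)" using that by simp
    ultimately show ?thesis by linarith
  qed
  then have "sorted_wrt (<) us" by (simp add: sorted_wrt_iff_nth_less)
  moreover have "edge_pattern R us vs = E" using us E by (auto simp: edge_pattern_def)
  ultimately show ?thesis using us(1) by blast
qed

lemma ex_cells_for_flip:
  fixes us vs :: "rat list"
  assumes us: "distinct us" and vs: "distinct vs" and rs: "r < length us" "s < length vs"
    and P: "P = edge_pattern R us vs" "(r, s) \<notin> P"
  obtains lo1 hi1 F1 T1 lo2 hi2 F2 T2 where
    "lo1 < hi1" "finite F1" "T1 \<subseteq> F1" "lo2 < hi2" "finite F2" "T2 \<subseteq> F2"
    "F2 \<inter> {lo1<..<hi1} = {}" "F1 \<inter> {lo2<..<hi2} = {}"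
    "\<And>u v. in_cell R lo1 hi1 F1 T1 u \<Longrightarrow> in_cell R\<inverse>\<inverse> lo2 hi2 F2 T2 v \<Longrightarrow>
      same_order_type us (us[r := u]) \<and> same_order_type vs (vs[s := v]) \<and>
      edge_pattern R (us[r := u]) (vs[s := v]) = (if R u v then insert (r, s) P else P)"
proof -
  obtain lo1 hi1 where I1: "lo1 < us ! r" "us ! r < hi1"
    and out1: "\<forall>y\<in>set us. y \<noteq> us ! r \<longrightarrow> y \<le> lo1 \<or> hi1 \<le> y"
    using ex_isolating_interval[OF finite_set] by blast
  obtain lo2 hi2 where I2: "lo2 < vs ! s" "vs ! s < hi2"
    and out2: "\<forall>y\<in>set vs. y \<noteq> vs ! s \<longrightarrow> y \<le> lo2 \<or> hi2 \<le> y"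
    using ex_isolating_interval[OF finite_set] by blast
  define F1 where "F1 = set vs - {vs ! s}"
  define T1 where "T1 = (\<lambda>q. vs ! q) ` {q. (r, q) \<in> P}"
  define F2 where "F2 = set us - {us ! r}"
  define T2 where "T2 = (\<lambda>p. us ! p) ` {p. (p, s) \<in> P}"
  have P_box: "(p, q) \<in> P \<Longrightarrow> p < length us \<and> q < length vs" for p q
    using P(1) by (simp add: edge_pattern_def)
  have vs_eq: "vs ! q = vs ! q' \<longleftrightarrow> q = q'" if "q < length vs" "q' < length vs" for q q'
    using vs that by (simp add: nth_eq_iff_index_eq)
  have us_eq: "us ! p = us ! p' \<longleftrightarrow> p = p'" if "p < length us" "p' < length us" for p p'
    using us that by (simp add: nth_eq_iff_index_eq)
  have T1: "vs ! q \<in> T1 \<longleftrightarrow> (r, q) \<in> P" if "q < length vs" for q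
    using that P_box vs_eq unfolding T1_def by blast
  have T2: "us ! p \<in> T2 \<longleftrightarrow> (p, s) \<in> P" if "p < length us" for p
    using that P_box us_eq unfolding T2_def by blast
  show ?thesis
  proof
    show "lo1 < hi1" "lo2 < hi2" using I1 I2 by simp_all
    show "finite F1" "finite F2" by (simp_all add: F1_def F2_def)
    show "T1 \<subseteq> F1" using P(2) P_box vs_eq rs unfolding T1_def F1_def by fastforce
    show "T2 \<subseteq> F2" using P(2) P_box us_eq rs unfolding T2_def F2_def by fastforce
    show "F2 \<inter> {lo1<..<hi1} = {}" using out1 unfolding F2_def by fastforce
    show "F1 \<inter> {lo2<..<hi2} = {}" using out2 unfolding F1_def by fastforce
    fix u v assume u: "in_cell R lo1 hi1 F1 T1 u" and v: "in_cell R\<inverse>\<inverse> lo2 hi2 F2 T2 v"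
    have "us ! p \<le> lo1 \<or> hi1 \<le> us ! p" if "p < length us" "p \<noteq> r" for p
      using out1 that us_eq rs by auto
    then have "same_order_type us (us[r := u])"
      using rs I1 u by (intro same_order_type_update) (auto simp: in_cell_def)
    moreover have "vs ! q \<le> lo2 \<or> hi2 \<le> vs ! q" if "q < length vs" "q \<noteq> s" for q
      using out2 that vs_eq rs by auto
    then have "same_order_type vs (vs[s := v])"
      using rs I2 v by (intro same_order_type_update) (auto simp: in_cell_def)
    moreover have "R u (vs ! q) \<longleftrightarrow> (r, q) \<in> P" if "q < length vs" "q \<noteq> s" for q
      using u that T1 vs_eq rs unfolding in_cell_def F1_def by auto
    moreover have "R (us ! p) v \<longleftrightarrow> (p, s) \<in> P" if "p < length us" "p \<noteq> r" for p
      using v that T2 us_eq rs unfolding in_cell_def F2_def by auto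
    ultimately show "same_order_type us (us[r := u]) \<and> same_order_type vs (vs[s := v]) \<and>
      edge_pattern R (us[r := u]) (vs[s := v]) = (if R u v then insert (r, s) P else P)"
      using edge_pattern_update[OF P(1) rs P(2)] by blast
  qed
qed

section \<open>From a failure of indiscernibility to definable edges\<close>

lemma ex_reindex_subset:
  assumes "set xs \<subseteq> set ys"
  shows "\<exists>\<sigma>. \<forall>k<length xs. \<sigma> k < length ys \<and> ys ! \<sigma> k = xs ! k"
proof -
  have "\<forall>k. \<exists>i. k < length xs \<longrightarrow> i < length ys \<and> ys ! i = xs ! k"
  proof
    fix k
    show "\<exists>i. k < length xs \<longrightarrow> i < length ys \<and> ys ! i = xs ! k"
    proof (cases "k < length xs")
      case True
      then have "xs ! k \<in> set ys" using assms nth_mem by blast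
      then show ?thesis by (auto simp: in_set_conv_nth)
    qed simp
  qed
  then show ?thesis by (rule choice)
qed

definition ab_tuple :: "(rat \<Rightarrow> 'a list) \<Rightarrow> (rat \<Rightarrow> 'a list) \<Rightarrow> rat list \<Rightarrow> rat list \<Rightarrow> 'a list" where
  "ab_tuple a b us vs = concat (map a us) @ concat (map b vs)"

lemma length_concat_map_const: "(\<And>i. length (a i) = n) \<Longrightarrow> length (concat (map a xs)) = length xs * n"
  by (induction xs) auto

lemma length_ab_tuple:
  "(\<And>i. length (a i) = na) \<Longrightarrow> (\<And>j. length (b j) = nb) \<Longrightarrow>
    length (ab_tuple a b us vs) = length us * na + length vs * nb"
  by (simp add: ab_tuple_def length_concat_map_const)

lemma nth_concat_map_update:
  assumes n: "\<And>i. length (a i) = n" and r: "r < length xs"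
  shows "concat (map a (xs[r := y])) ! k =
    (if r * n \<le> k \<and> k < r * n + n then a y ! (k - r * n) else concat (map a xs) ! k)"
proof -
  have xs: "xs = take r xs @ xs ! r # drop (Suc r) xs" using r by (simp add: id_take_nth_drop)
  have upd: "xs[r := y] = take r xs @ y # drop (Suc r) xs"
    using r by (simp add: upd_conv_take_nth_drop)
  have len: "length (concat (map a (take r xs))) = r * n"
    using r by (simp add: length_concat_map_const[OF n])
  have upd_split:
    "concat (map a (xs[r := y])) =
      concat (map a (take r xs)) @ a y @ concat (map a (drop (Suc r) xs))"
    by (subst upd) simp
  have split:
    "concat (map a xs) =
      concat (map a (take r xs)) @ a (xs ! r) @ concat (map a (drop (Suc r) xs))"
    using arg_cong[OF xs, of "\<lambda>l. concat (map a l)"] by simp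
  consider "k < r * n" | "r * n \<le> k" "k < r * n + n" | "r * n + n \<le> k" by linarith
  then show ?thesis
  proof cases
    case 1
    then show ?thesis by (simp add: upd_split split nth_append len)
  next
    case 2
    then have "k - r * n < n" by arith
    then show ?thesis using 2 by (simp add: upd_split split nth_append len n)
  next
    case 3
    then have "\<not> k - r * n < n" by arith
    then show ?thesis using 3 by (simp add: upd_split split nth_append len n)
  qed
qed

text \<open>The reindexing \<open>\<sigma>\<close> does not depend on \<open>u\<close> and \<open>v\<close>, so \<open>ren \<sigma>\<close> turns one formula about the
  updated tuples into one formula about \<open>a u @ b v\<close> with fixed parameters.\<close>

lemma ab_tuple_update_reindex:
  assumes na: "\<And>i. length (a i) = na" and nb: "\<And>j. length (b j) = nb"
    and rs: "r < length us" "s < length vs"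
  obtains \<sigma> where "\<And>u v k. k < length us * na + length vs * nb \<Longrightarrow>
    \<sigma> k < na + nb + length (ab_tuple a b us vs) \<and>
    (a u @ b v @ ab_tuple a b us vs) ! \<sigma> k = ab_tuple a b (us[r := u]) (vs[s := v]) ! k"
proof
  let ?m = "length us * na"
  define \<sigma> where "\<sigma> k =
    (if k < ?m then (if r * na \<le> k \<and> k < r * na + na then k - r * na else na + nb + k)
     else if s * nb \<le> k - ?m \<and> k - ?m < s * nb + nb then na + (k - ?m - s * nb) else na + nb + k)"
    for k
  fix u v k assume k: "k < length us * na + length vs * nb"
  let ?T = "ab_tuple a b us vs"
  have lens: "length (concat (map a us)) = ?m" "length (concat (map b vs)) = length vs * nb"
    "length (a u) = na" "length (b v) = nb"
    by (simp_all add: length_concat_map_const na nb)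
  have tail: "(a u @ b v @ ?T) ! (na + nb + k) = ?T ! k" by (simp add: nth_append lens)
  have lenT: "length ?T = ?m + length vs * nb" by (simp add: ab_tuple_def lens)
  show "\<sigma> k < na + nb + length ?T \<and>
    (a u @ b v @ ?T) ! \<sigma> k = ab_tuple a b (us[r := u]) (vs[s := v]) ! k"
  proof (cases "k < ?m")
    case True
    then have "ab_tuple a b (us[r := u]) (vs[s := v]) ! k = concat (map a (us[r := u])) ! k"
      by (simp add: ab_tuple_def nth_append length_concat_map_const na)
    also have "\<dots> =
        (if r * na \<le> k \<and> k < r * na + na then a u ! (k - r * na) else concat (map a us) ! k)"
      by (rule nth_concat_map_update[OF na rs(1)])
    finally show ?thesis
      using True k tail lenT by (auto simp: \<sigma>_def nth_append lens ab_tuple_def)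
  next
    case False
    then have "ab_tuple a b (us[r := u]) (vs[s := v]) ! k = concat (map b (vs[s := v])) ! (k - ?m)"
      by (simp add: ab_tuple_def nth_append length_concat_map_const na)
    also have "\<dots> = (if s * nb \<le> k - ?m \<and> k - ?m < s * nb + nb then b v ! (k - ?m - s * nb)
        else concat (map b vs) ! (k - ?m))"
      by (rule nth_concat_map_update[OF nb rs(2)])
    finally show ?thesis
      using False k tail lenT by (auto simp: \<sigma>_def nth_append lens ab_tuple_def)
  qed
qed

lemma same_type_if_same_order_pattern:
  assumes "Lstar_indisc L M R (case_sum a b)"
    and "same_order_type us us'" "same_order_type vs vs'"
      "edge_pattern R us vs = edge_pattern R us' vs'"
  shows "same_type L M (ab_tuple a b us vs) (ab_tuple a b us' vs')"
proof -
  have "concat (map (case_sum a b) (map Inl xs @ map Inr ys)) = ab_tuple a b xs ys" for xs ys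
    by (simp add: ab_tuple_def comp_def)
  then show ?thesis
    using assms same_qftp_if_same_order_pattern[OF assms(2-4)] unfolding Lstar_indisc_def by metis
qed

locale Lstar_indisc_family =
  fixes L :: "('f, 'r) lang" and M :: "('a, 'f, 'r) struc" and R :: "rat \<Rightarrow> rat \<Rightarrow> bool"
    and a b :: "rat \<Rightarrow> 'a list" and na nb :: nat
  assumes struc: "is_struc L M" and gstar: "gstar R"
    and a: "\<And>i. length (a i) = na \<and> set (a i) \<subseteq> dom M"
    and b: "\<And>j. length (b j) = nb \<and> set (b j) \<subseteq> dom M"
    and indisc: "Lstar_indisc L M R (case_sum a b)"
begin

lemma length_a: "length (a i) = na"
  using a by simp

lemma length_b: "length (b j) = nb"
  using b by simp

lemma length_ab: "length (ab_tuple a b us vs) = length us * na + length vs * nb"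
  using a b by (intro length_ab_tuple) auto

lemma sat_ab_tuple_cong:
  assumes "same_order_type us us'" "same_order_type vs vs'"
      "edge_pattern R us vs = edge_pattern R us' vs'"
    and \<psi>: "wf_fm L \<psi>" "fv \<psi> \<subseteq> {..<length us * na + length vs * nb}" and e: "range e \<subseteq> dom M"
  shows "sat M (env (ab_tuple a b us vs) e) \<psi> = sat M (env (ab_tuple a b us' vs') e) \<psi>"
  using same_type_if_same_order_pattern[OF indisc assms(1-3)] \<psi> e
  unfolding same_type_def by (simp add: length_ab)

text \<open>The formula defining the edges says of \<open>a u @ b v @ ab_tuple a b us1 vs\<close> what \<open>\<psi>\<close> (or its
  negation) says of the tuple in which the blocks at positions \<open>r\<close> and \<open>s\<close> are replaced by
  \<open>a u\<close> and \<open>b v\<close>.\<close>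

lemma defines_edges_if_flip:
  assumes \<psi>: "wf_fm L \<psi>" "fv \<psi> \<subseteq> {..<K * na + length vs * nb}" and e: "range e \<subseteq> dom M"
    and vs: "distinct vs"
    and us1: "sorted_wrt (<) us1" "length us1 = K" and us2: "sorted_wrt (<) us2" "length us2 = K"
    and rs: "r < K" "s < length vs" "(r, s) \<notin> edge_pattern R us1 vs"
    and flip: "edge_pattern R us2 vs = insert (r, s) (edge_pattern R us1 vs)"
    and differ: "sat M (env (ab_tuple a b us1 vs) e) \<psi> \<noteq> sat M (env (ab_tuple a b us2 vs) e) \<psi>"
  shows "defines_edges_on_cells L M R a b na nb"
proof -
  let ?P = "edge_pattern R us1 vs"
  have r: "r < length us1" using rs(1) us1(2) by simp
  have us1_distinct: "distinct us1" using us1(1) by (simp add: strict_sorted_iff)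
  obtain lo1 hi1 F1 T1 lo2 hi2 F2 T2 where cells: "lo1 < hi1" "finite F1" "T1 \<subseteq> F1"
      "lo2 < hi2" "finite F2" "T2 \<subseteq> F2" "F2 \<inter> {lo1<..<hi1} = {}" "F1 \<inter> {lo2<..<hi2} = {}"
    and update: "\<And>u v. in_cell R lo1 hi1 F1 T1 u \<Longrightarrow> in_cell R\<inverse>\<inverse> lo2 hi2 F2 T2 v \<Longrightarrow>
      same_order_type us1 (us1[r := u]) \<and> same_order_type vs (vs[s := v]) \<and>
      edge_pattern R (us1[r := u]) (vs[s := v]) = (if R u v then insert (r, s) ?P else ?P)"
    by (rule ex_cells_for_flip[OF us1_distinct vs r rs(2) refl rs(3)]) (rule that)
  define \<chi> where "\<chi> = (if sat M (env (ab_tuple a b us2 vs) e) \<psi> then \<psi> else Neg \<psi>)"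
  have \<chi>: "wf_fm L \<chi>" "fv \<chi> \<subseteq> {..<K * na + length vs * nb}" using \<psi> by (simp_all add: \<chi>_def)
  have \<chi>_iff: "sat M (env (ab_tuple a b (us1[r := u]) (vs[s := v])) e) \<chi> \<longleftrightarrow> R u v"
    if "in_cell R lo1 hi1 F1 T1 u" "in_cell R\<inverse>\<inverse> lo2 hi2 F2 T2 v" for u v
  proof -
    let ?us = "if R u v then us2 else us1"
    have "same_order_type us1 ?us"
      using sorted_same_order_type[OF us1(1) us2(1)] us1(2) us2(2) same_order_type_refl by simp
    then have "same_order_type (us1[r := u]) ?us"
      using update[OF that] same_order_type_sym same_order_type_trans by blast
    moreover have "same_order_type (vs[s := v]) vs"
      using update[OF that] same_order_type_sym by blast
    moreover have "edge_pattern R (us1[r := u]) (vs[s := v]) = edge_pattern R ?us vs"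
      using update[OF that] flip by simp
    ultimately have "sat M (env (ab_tuple a b (us1[r := u]) (vs[s := v])) e) \<psi>
        = sat M (env (ab_tuple a b ?us vs) e) \<psi>"
      using \<psi> e us1(2) by (intro sat_ab_tuple_cong) simp_all
    then show ?thesis using differ unfolding \<chi>_def by (cases "R u v") auto
  qed
  define ps where "ps = ab_tuple a b us1 vs"
  obtain \<sigma> where \<sigma>: "\<And>u v k. k < length us1 * na + length vs * nb \<Longrightarrow> \<sigma> k < na + nb + length ps \<and>
      (a u @ b v @ ps) ! \<sigma> k = ab_tuple a b (us1[r := u]) (vs[s := v]) ! k"
    by (rule ab_tuple_update_reindex[where a = a and b = b, OF length_a length_b r rs(2),
          folded ps_def])
      (rule that)
  have reads: "k < length (ab_tuple a b (us1[r := u]) (vs[s := v])) \<Longrightarrow>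
      \<sigma> k < length (a u @ b v @ ps) \<and>
      (a u @ b v @ ps) ! \<sigma> k = ab_tuple a b (us1[r := u]) (vs[s := v]) ! k"
    for u v k using \<sigma>[of k u v] a b by (simp add: length_ab)
  have fv_upd: "fv \<chi> \<subseteq> {..<length (ab_tuple a b (us1[r := u]) (vs[s := v]))}" for u v
    using \<chi>(2) us1(2) by (simp add: length_ab)
  have len: "length (a 0 @ b 0 @ ps) = na + nb + length ps" using a b by simp
  have fv_ren: "fv (ren \<sigma> \<chi>) \<subseteq> {..<na + nb + length ps}"
    using fv_ren_env[OF fv_upd[of 0 0] reads[where u = 0 and v = 0]] unfolding len .
  have edges: "sat M (env (a u @ b v @ ps) e') (ren \<sigma> \<chi>) \<longleftrightarrow> R u v"
    if "in_cell R lo1 hi1 F1 T1 u" "in_cell R\<inverse>\<inverse> lo2 hi2 F2 T2 v" for u v e'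
  proof -
    have "sat M (env (a u @ b v @ ps) e') (ren \<sigma> \<chi>) =
        sat M (env (ab_tuple a b (us1[r := u]) (vs[s := v])) e') \<chi>"
      by (rule sat_ren_env[OF fv_upd reads])
    also have "\<dots> = sat M (env (ab_tuple a b (us1[r := u]) (vs[s := v])) e) \<chi>"
      by (rule sat_env_indep[OF fv_upd])
    finally show ?thesis using \<chi>_iff[OF that] by simp
  qed
  have ps_params: "set ps \<subseteq> params a \<union> params b" unfolding ps_def ab_tuple_def params_def by auto
  show ?thesis
    using wf_ren[THEN iffD2, OF \<chi>(1)] fv_ren ps_params cells edges by (rule defines_edges_on_cellsI)
qed

text \<open>If some \<open>\<psi>\<close> tells apart two increasing \<open>K\<close>-tuples of \<open>a\<close>-indices next to the same
  \<open>b\<close>-indices, then, by \<open>L\<^sup>*\<close>-indiscernibility, its truth value is a function \<open>f\<close> of the edge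
  pattern alone; walking from one pattern to the other, \<open>f\<close> changes at a single edge.\<close>

lemma defines_edges_if_distinguished:
  assumes \<psi>: "wf_fm L \<psi>" "fv \<psi> \<subseteq> {..<K * na + length vs * nb}" and e: "range e \<subseteq> dom M"
    and vs: "distinct vs"
    and is1: "sorted_wrt (<) is1" "length is1 = K" and is2: "sorted_wrt (<) is2" "length is2 = K"
    and differ: "sat M (env (ab_tuple a b is1 vs) e) \<psi> \<noteq> sat M (env (ab_tuple a b is2 vs) e) \<psi>"
  shows "defines_edges_on_cells L M R a b na nb"
proof -
  define val where "val us = sat M (env (ab_tuple a b us vs) e) \<psi>" for us
  define realizes where
    "realizes E us \<longleftrightarrow> length us = K \<and> sorted_wrt (<) us \<and> edge_pattern R us vs = E"
    for E us
  have val_cong: "val us = val us'" if "realizes E us" "realizes E us'" for E us us'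
  proof -
    have "same_order_type us us'"
      using that unfolding realizes_def by (intro sorted_same_order_type) auto
    moreover have "edge_pattern R us vs = edge_pattern R us' vs"
      using that unfolding realizes_def by simp
    moreover have "fv \<psi> \<subseteq> {..<length us * na + length vs * nb}"
      using that \<psi>(2) by (simp add: realizes_def)
    ultimately show ?thesis
      unfolding val_def using sat_ab_tuple_cong[OF _ same_order_type_refl _ \<psi>(1) _ e] by blast
  qed
  have ex_realizes: "\<exists>us. realizes E us" if "E \<subseteq> {..<K} \<times> {..<length vs}" for E
    using gstar_ex_sorted_with_edge_pattern[OF gstar vs that] unfolding realizes_def .
  define f where "f E = val (SOME us. realizes E us)" for E
  have f: "f E = val us" if "realizes E us" for E us
  proof -
    have "realizes E (SOME us. realizes E us)" using that by (rule someI)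
    then show ?thesis unfolding f_def by (rule val_cong[OF _ that])
  qed
  define P1 where "P1 = edge_pattern R is1 vs"
  define P2 where "P2 = edge_pattern R is2 vs"
  have box: "P1 \<union> P2 \<subseteq> {..<K} \<times> {..<length vs}"
    using edge_pattern_subset[of R is1 vs] edge_pattern_subset[of R is2 vs] is1(2) is2(2)
    unfolding P1_def P2_def by auto
  then have "finite (P1 \<union> P2)" by (rule finite_subset) simp
  then have "finite P1" "finite P2" by simp_all
  moreover have "f P1 \<noteq> f P2"
    using f[of P1 is1] f[of P2 is2] differ is1 is2
      unfolding realizes_def P1_def P2_def val_def by simp
  ultimately obtain E x where x: "x \<notin> E" "insert x E \<subseteq> P1 \<union> P2" and fx: "f (insert x E) \<noteq> f E"
    by (rule ex_insert_changes)
  obtain r s where rs: "x = (r, s)" by (cases x)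
  then have rs_box: "r < K" "s < length vs" using x(2) box by auto
  have "insert x E \<subseteq> {..<K} \<times> {..<length vs}" using x(2) box by (rule order_trans)
  then obtain us1 us2 where us1: "realizes E us1" and us2: "realizes (insert x E) us2"
    using ex_realizes[of E] ex_realizes[of "insert x E"] by auto
  show ?thesis
  proof (rule defines_edges_if_flip[OF \<psi> e vs _ _ _ _ rs_box])
    show "sorted_wrt (<) us1" "length us1 = K" "sorted_wrt (<) us2" "length us2 = K"
      using us1 us2 by (simp_all add: realizes_def)
    show "(r, s) \<notin> edge_pattern R us1 vs"
      "edge_pattern R us2 vs = insert (r, s) (edge_pattern R us1 vs)"
      using us1 us2 x(1) rs by (simp_all add: realizes_def)
    show "sat M (env (ab_tuple a b us1 vs) e) \<psi> \<noteq> sat M (env (ab_tuple a b us2 vs) e) \<psi>"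
      using fx f[OF us1] f[OF us2] unfolding val_def by simp
  qed
qed

text \<open>A formula with parameters from the \<open>b\<close>-sequence that separates two increasing tuples of the
  \<open>a\<close>-sequence can be taken to use whole blocks \<open>b j\<close> as its parameters.\<close>

lemma ex_distinguishing_formula:
  assumes "\<not> order_indisc_over L M (params b) a"
  obtains is1 is2 vs \<psi> e where "sorted_wrt (<) is1" "sorted_wrt (<) is2" "length is2 = length is1"
    "distinct vs" "wf_fm L \<psi>" "fv \<psi> \<subseteq> {..<length is1 * na + length vs * nb}" "range e \<subseteq> dom M"
    "sat M (env (ab_tuple a b is1 vs) e) \<psi> \<noteq> sat M (env (ab_tuple a b is2 vs) e) \<psi>"
proof -
  obtain is1 is2 where is12: "sorted_wrt (<) is1" "sorted_wrt (<) is2" "length is1 = length is2"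
    and not_same: "\<not> same_type_over L M (params b) (concat (map a is1)) (concat (map a is2))"
    using assms unfolding order_indisc_over_def by blast
  define n where "n = length is1 * na"
  have len_X: "length (concat (map a is1)) = n" "length (concat (map a is2)) = n"
    using is12(3) a by (simp_all add: n_def length_concat_map_const)
  obtain qs where qs: "set qs \<subseteq> params b"
    and "\<not> same_type L M (concat (map a is1) @ qs) (concat (map a is2) @ qs)"
    using not_same len_X unfolding same_type_over_def by auto
  then obtain \<phi> e where \<phi>: "wf_fm L \<phi>" "fv \<phi> \<subseteq> {..<n + length qs}" and e: "range e \<subseteq> dom M"
    and differ:
      "sat M (env (concat (map a is1) @ qs) e) \<phi> \<noteq> sat M (env (concat (map a is2) @ qs) e) \<phi>"
    using len_X unfolding same_type_def by auto
  have "\<forall>q\<in>set qs. \<exists>j. q \<in> set (b j)" using qs unfolding params_def by blast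
  then obtain j where j: "\<forall>q\<in>set qs. q \<in> set (b (j q))" by (rule bchoice[THEN exE])
  define vs where "vs = remdups (map j qs)"
  define B where "B = concat (map b vs)"
  have "set qs \<subseteq> set B" using j unfolding B_def vs_def by auto
  then obtain \<sigma>0 where \<sigma>0: "\<forall>k<length qs. \<sigma>0 k < length B \<and> B ! \<sigma>0 k = qs ! k"
    using ex_reindex_subset by blast
  define \<sigma> where "\<sigma> k = (if k < n then k else n + \<sigma>0 (k - n))" for k
  have reads: "\<sigma> k < length (X @ B) \<and> (X @ B) ! \<sigma> k = (X @ qs) ! k"
    if "length X = n" "k < length (X @ qs)" for X :: "'a list" and k
    using that \<sigma>0 by (auto simp: \<sigma>_def nth_append)
  have X_B: "concat (map a is) @ B = ab_tuple a b is vs" for "is" by (simp add: ab_tuple_def B_def)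
  have fv_X: "fv \<phi> \<subseteq> {..<length (concat (map a is) @ qs)}" if "length is = length is1" for "is"
    using \<phi>(2) that a by (simp add: n_def length_concat_map_const)
  show ?thesis
  proof (rule that[OF is12(1,2) is12(3)[symmetric] _ wf_ren[THEN iffD2, OF \<phi>(1)] _ e])
    show "distinct vs" by (simp add: vs_def)
    have "fv (ren \<sigma> \<phi>) \<subseteq> {..<length (concat (map a is1) @ B)}"
      by (rule fv_ren_env[OF fv_X[OF refl] reads[OF len_X(1)]])
    then show "fv (ren \<sigma> \<phi>) \<subseteq> {..<length is1 * na + length vs * nb}"
      by (simp add: X_B length_ab)
    have "sat M (env (ab_tuple a b is1 vs) e) (ren \<sigma> \<phi>) = sat M (env (concat (map a is1) @ qs) e) \<phi>"
      unfolding X_B[symmetric] by (rule sat_ren_env[OF fv_X[OF refl] reads[OF len_X(1)]])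
    moreover have
      "sat M (env (ab_tuple a b is2 vs) e) (ren \<sigma> \<phi>) = sat M (env (concat (map a is2) @ qs) e) \<phi>"
      unfolding X_B[symmetric]
        by (rule sat_ren_env[OF fv_X[OF is12(3)[symmetric]] reads[OF len_X(2)]])
    ultimately show
      "sat M (env (ab_tuple a b is1 vs) e) (ren \<sigma> \<phi>) \<noteq>
        sat M (env (ab_tuple a b is2 vs) e) (ren \<sigma> \<phi>)"
      using differ by simp
  qed
qed

lemma defines_edges_if_not_indisc:
  assumes "\<not> order_indisc_over L M (params b) a"
  shows "defines_edges_on_cells L M R a b na nb"
proof -
  obtain is1 is2 vs \<psi> e
    where is12: "sorted_wrt (<) is1" "sorted_wrt (<) is2" "length is2 = length is1"
    and rest: "distinct vs" "wf_fm L \<psi>" "fv \<psi> \<subseteq> {..<length is1 * na + length vs * nb}"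
      "range e \<subseteq> dom M"
      "sat M (env (ab_tuple a b is1 vs) e) \<psi> \<noteq> sat M (env (ab_tuple a b is2 vs) e) \<psi>"
    by (rule ex_distinguishing_formula[OF assms]) (rule that)
  show ?thesis
    by (rule defines_edges_if_distinguished[OF rest(2,3,4,1) is12(1) refl is12(2,3) rest(5)])
qed

end

lemma defines_edges_on_cells_swap:
  fixes M :: "('a, 'f, 'r) struc"
  assumes "defines_edges_on_cells L M R\<inverse>\<inverse> b a nb na"
    and a: "\<And>i. length (a i) = na" and b: "\<And>j. length (b j) = nb"
  shows "defines_edges_on_cells L M R a b na nb"
proof -
  obtain \<psi> ps lo1 hi1 F1 T1 lo2 hi2 F2 T2 where
    \<psi>: "wf_fm L \<psi>" "fv \<psi> \<subseteq> {..<nb + na + length ps}" and ps: "set ps \<subseteq> params b \<union> params a"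
    and cells: "lo1 < hi1" "finite F1" "T1 \<subseteq> F1" "lo2 < hi2" "finite F2" "T2 \<subseteq> F2"
      "F2 \<inter> {lo1<..<hi1} = {}" "F1 \<inter> {lo2<..<hi2} = {}"
    and edges: "\<And>u v e. in_cell R\<inverse>\<inverse> lo1 hi1 F1 T1 u \<Longrightarrow> in_cell R\<inverse>\<inverse>\<inverse>\<inverse> lo2 hi2 F2 T2 v \<Longrightarrow>
      range e \<subseteq> dom M \<Longrightarrow> sat M (env (b u @ a v @ ps) e) \<psi> \<longleftrightarrow> R\<inverse>\<inverse> u v"
    by (rule defines_edges_on_cellsE[OF assms(1)]) (rule that)
  define \<sigma> where "\<sigma> k = (if k < nb then na + k else if k < nb + na then k - nb else k)" for k
  have reads: "k < length (b v @ a u @ ps) \<Longrightarrow>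
      \<sigma> k < length (a u @ b v @ ps) \<and> (a u @ b v @ ps) ! \<sigma> k = (b v @ a u @ ps) ! k" for u v k
    using a b by (auto simp: \<sigma>_def nth_append add.commute)
  have fv_ba: "fv \<psi> \<subseteq> {..<length (b v @ a u @ ps)}" for u v using \<psi>(2) a b by (simp add: ac_simps)
  have len: "length (a 0 @ b 0 @ ps) = na + nb + length ps" using a b by simp
  have fv_ren: "fv (ren \<sigma> \<psi>) \<subseteq> {..<na + nb + length ps}"
    using fv_ren_env[OF fv_ba[of 0 0] reads[where u = 0 and v = 0]] unfolding len .
  show ?thesis
  proof (rule defines_edges_on_cellsI[OF wf_ren[THEN iffD2, OF \<psi>(1)] fv_ren _ cells(4-6,1-3,8,7)])
    show "set ps \<subseteq> params a \<union> params b" using ps by blast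
    fix u v and e :: "nat \<Rightarrow> 'a"
    assume uv: "in_cell R lo2 hi2 F2 T2 u" "in_cell R\<inverse>\<inverse> lo1 hi1 F1 T1 v" and e: "range e \<subseteq> dom M"
    have "sat M (env (a u @ b v @ ps) e) (ren \<sigma> \<psi>) = sat M (env (b v @ a u @ ps) e) \<psi>"
      by (rule sat_ren_env[OF fv_ba reads])
    then show "sat M (env (a u @ b v @ ps) e) (ren \<sigma> \<psi>) \<longleftrightarrow> R u v"
      using edges[OF uv(2) _ e] uv(1) by simp
  qed
qed

theorem lemma2:
  fixes L :: "('f, 'r) lang" and M :: "('a, 'f, 'r) struc"
    and R :: "rat \<Rightarrow> rat \<Rightarrow> bool"
    and a b :: "rat \<Rightarrow> 'a list" and na nb :: nat
  assumes "is_struc L M"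
    and "gstar R"
    and "\<And>i. length (a i) = na \<and> set (a i) \<subseteq> dom M"
    and "\<And>j. length (b j) = nb \<and> set (b j) \<subseteq> dom M"
    and "Lstar_indisc L M R (case_sum a b)"
  shows "mutually_indisc L M a b \<or>
    (\<exists>\<phi> ps. wf_fm L \<phi> \<and> fv \<phi> \<subseteq> {..<na + nb + length ps} \<and>
       set ps \<subseteq> params a \<union> params b \<and> has_IP L M \<phi> na nb ps)"
proof (cases "mutually_indisc L M a b")
  case False
  interpret ab: Lstar_indisc_family L M R a b na nb
    using assms by unfold_locales
  interpret ba: Lstar_indisc_family L M "R\<inverse>\<inverse>" b a nb na
    using assms gstar_conversep Lstar_indisc_swap by unfold_locales
  have "defines_edges_on_cells L M R a b na nb"
  proof (cases "order_indisc_over L M (params b) a")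
    case True
    with False have "\<not> order_indisc_over L M (params a) b" unfolding mutually_indisc_def by blast
    then have "defines_edges_on_cells L M R\<inverse>\<inverse> b a nb na" by (rule ba.defines_edges_if_not_indisc)
    then show ?thesis by (rule defines_edges_on_cells_swap) (simp_all add: ab.length_a ab.length_b)
  next
    case False
    then show ?thesis by (rule ab.defines_edges_if_not_indisc)
  qed
  then show ?thesis using has_IP_if_defines_edges[where a = a and b = b, OF assms(1-4)] by blast
qed simp

end
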